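(* Assume $\tau_h\le(1+1/(3\boldsymbol\kappa^2))^{1/4}$ and $\theta_h\le1/(4\boldsymbol\kappa)$. Then for every $u:\Omega_h\to\mathbb R$, $$\mathcal F'_h(u)\le17\,\mathcal F_h(u).$$
   Context: Let $\mathbf D:\mathbb R^2\to S_2^+$ be continuous and $\mathbb Z^2$-periodic. Set $\mathbf M(z):=\det(\mathbf D(z))^{1/2}\mathbf D(z)^{-1}$, $\|e\|_M:=\sqrt{\langle e,Me\rangle}$, $\kappa(M):=\sqrt{\|M\|\|M^{-1}\|}$, and $\boldsymbol\kappa:=\max_z\kappa(\mathbf D(z))$. Let $h=1/n$ and $\Omega_h:=[0,1)^2\cap h\mathbb Z^2$. Functions on $\Omega_h$ are extended $\mathbb Z^2$-periodically to $h\mathbb Z^2$. Constants: $\tau(p,q)$ is the least $\tau\ge1$ with $\tau^{-2}\mathbf M(p)\le\mathbf M(q)\le\tau^2\mathbf M(p)$. For any $h>0$, $\tau_h:=\max\{\tau(p,q):\|p-q\|\le2\boldsymbol\kappa h\}$, $\theta_h:=\boldsymbol\kappa(3+9\tau_{2h}^2)(\tau_{2h}^2-1)$, and $\theta_0:=1/(4\boldsymbol\kappa)$. Reduced bases: an $M$-reduced basis is a basis $(e_1,e_2)$ of $\mathbb Z^2$ with $\|e_1\|_M$ minimal over $\mathbb Z^2\setminus\{0\}$ and $\|e_2\|_M$ minimal over $\mathbb Z^2\setminus e_1\mathbb Z$; $\mu(M):=|\langle e_1,Me_2\rangle|$. $V(p):=\{\pm e_0,\pm e_1,\pm e_2\}$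 for an $\mathbf M(p)$-obtuse superbase $(e_0,e_1,e_2)$ of $\mathbb Z^2$ (sum zero, $(e_1,e_2)$ basis, pairwise $\mathbf M(p)$-scalar products $\le0$). Stencils: if $\mu(\mathbf M(p))\le\theta_0$, set $W(p):=\{\pm e,\pm f\}$ and $W'(p):=\{\pm e,\pm f,\pm(e+f),\pm(e-f)\}$ for an $\mathbf M(p)$-reduced basis $(e,f)$ (independent of the choice). Otherwise set $W(p):=W'(p):=V(p)$. Energies: $$\mathcal F_h(u):=\sum_{z\in\Omega_h}\sum_{g\in W(z)}|u(z+hg)-u(z)|^2,\qquad \mathcal F'_h(u):=\sum_{z\in\Omega_h}\sum_{g\in W'(z)}|u(z+hg)-u(z)|^2 .$$ *)

theory Defs
  imports "HOL-Analysis.Analysis"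
begin

definition S2plus :: "(real^2^2) set" where
  "S2plus = {A. transpose A = A \<and> (\<forall>x::real^2. x \<noteq> 0 \<longrightarrow> 0 < x \<bullet> (A *v x))}"

definition Zvec :: "(real^2) set" where
  "Zvec = {v. \<forall>i. v $ i \<in> \<int>}"

definition Mof :: "(real^2 \<Rightarrow> real^2^2) \<Rightarrow> real^2 \<Rightarrow> real^2^2" where
  "Mof D z = sqrt (det (D z)) *\<^sub>R matrix_inv (D z)"

definition Mnorm :: "real^2^2 \<Rightarrow> real^2 \<Rightarrow> real" where
  "Mnorm M e = sqrt (e \<bullet> (M *v e))"

definition cond_num :: "real^2^2 \<Rightarrow> real" where
  "cond_num M = sqrt (onorm ((*v) M) * onorm ((*v) (matrix_inv M)))"

definition kappa_bold :: "(real^2 \<Rightarrow> real^2^2) \<Rightarrow> real" where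
  "kappa_bold D = Sup (range (\<lambda>z. cond_num (D z)))"

definition loewner_le :: "real^2^2 \<Rightarrow> real^2^2 \<Rightarrow> bool" where
  "loewner_le A B \<longleftrightarrow> (\<forall>x::real^2. x \<bullet> (A *v x) \<le> x \<bullet> (B *v x))"

definition tau_pq :: "(real^2 \<Rightarrow> real^2^2) \<Rightarrow> real^2 \<Rightarrow> real^2 \<Rightarrow> real" where
  "tau_pq D p q = (LEAST t::real. 1 \<le> t \<and>
      loewner_le ((1 / t\<^sup>2) *\<^sub>R Mof D p) (Mof D q) \<and>
      loewner_le (Mof D q) (t\<^sup>2 *\<^sub>R Mof D p))"

definition tau_h :: "(real^2 \<Rightarrow> real^2^2) \<Rightarrow> real \<Rightarrow> real" where
  "tau_h D h = Sup {tau_pq D p q | p q. norm (p - q) \<le> 2 * kappa_bold D * h}"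

definition theta_h :: "(real^2 \<Rightarrow> real^2^2) \<Rightarrow> real \<Rightarrow> real" where
  "theta_h D h = kappa_bold D * (3 + 9 * (tau_h D (2 * h))\<^sup>2) * ((tau_h D (2 * h))\<^sup>2 - 1)"

definition theta_0 :: "(real^2 \<Rightarrow> real^2^2) \<Rightarrow> real" where
  "theta_0 D = 1 / (4 * kappa_bold D)"

definition is_Zbasis :: "real^2 \<Rightarrow> real^2 \<Rightarrow> bool" where
  "is_Zbasis e1 e2 \<longleftrightarrow> e1 \<in> Zvec \<and> e2 \<in> Zvec \<and> \<bar>e1 $ 1 * e2 $ 2 - e1 $ 2 * e2 $ 1\<bar> = 1"

definition reduced_basis :: "real^2^2 \<Rightarrow> real^2 \<Rightarrow> real^2 \<Rightarrow> bool" where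
  "reduced_basis M e1 e2 \<longleftrightarrow> is_Zbasis e1 e2 \<and>
     (\<forall>v \<in> Zvec - {0}. Mnorm M e1 \<le> Mnorm M v) \<and>
     (\<forall>v \<in> Zvec - range (\<lambda>k::int. of_int k *\<^sub>R e1). Mnorm M e2 \<le> Mnorm M v)"

definition mu :: "real^2^2 \<Rightarrow> real" where
  "mu M = (case (SOME b. reduced_basis M (fst b) (snd b)) of (e1, e2) \<Rightarrow> \<bar>e1 \<bullet> (M *v e2)\<bar>)"

definition obtuse_superbase :: "real^2^2 \<Rightarrow> real^2 \<Rightarrow> real^2 \<Rightarrow> real^2 \<Rightarrow> bool" where
  "obtuse_superbase M e0 e1 e2 \<longleftrightarrow> e0 + e1 + e2 = 0 \<and> is_Zbasis e1 e2 \<and>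
     e0 \<bullet> (M *v e1) \<le> 0 \<and> e1 \<bullet> (M *v e2) \<le> 0 \<and> e0 \<bullet> (M *v e2) \<le> 0"

text \<open>Stencils; V is a chosen obtuse-superbase stencil V(p).\<close>
definition stencilW :: "(real^2 \<Rightarrow> real^2^2) \<Rightarrow> (real^2 \<Rightarrow> (real^2) set) \<Rightarrow> real^2 \<Rightarrow> (real^2) set" where
  "stencilW D V p = (if mu (Mof D p) \<le> theta_0 D then
      (case (SOME b. reduced_basis (Mof D p) (fst b) (snd b)) of (e, f) \<Rightarrow> {e, -e, f, -f})
    else V p)"

definition stencilW' :: "(real^2 \<Rightarrow> real^2^2) \<Rightarrow> (real^2 \<Rightarrow> (real^2) set) \<Rightarrow> real^2 \<Rightarrow> (real^2) set" where
  "stencilW' D V p = (if mu (Mof D p) \<le> theta_0 D then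
      (case (SOME b. reduced_basis (Mof D p) (fst b) (snd b)) of (e, f) \<Rightarrow>
         {e, -e, f, -f, e + f, -(e + f), e - f, -(e - f)})
    else V p)"

definition Omega :: "real \<Rightarrow> (real^2) set" where
  "Omega h = {z. \<forall>i. 0 \<le> z $ i \<and> z $ i < 1 \<and> z $ i / h \<in> \<int>}"

definition energy :: "(real^2 \<Rightarrow> (real^2) set) \<Rightarrow> real \<Rightarrow> (real^2 \<Rightarrow> real) \<Rightarrow> real" where
  "energy W h u = (\<Sum>z \<in> Omega h. \<Sum>g \<in> W z. (u (z + h *\<^sub>R g) - u z)\<^sup>2)"

end

theory Submission
  imports Defs
begin

text \<open>Where the coarse stencil at \<open>z\<close> is a reduced basis \<open>(e, f)\<close> of the metric \<open>M(z)\<close> with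
  small \<open>\<mu>\<close>, the refined stencil only adds the diagonals \<open>\<plusminus>(e \<plusminus> f)\<close>. By
  \<open>(a + b)\<^sup>2 \<le> 2 a\<^sup>2 + 2 b\<^sup>2\<close>, each diagonal difference splits into an axis difference at \<open>z\<close> and
  one at a neighbour \<open>z \<plusminus> h e\<close>. Smallness of \<open>\<mu>\<close> gives \<open>\<parallel>e\<parallel> \<le> 2 \<kappa>\<close>, so the metric at the
  neighbour is a \<open>\<tau>\<^sub>h\<close>-distortion of \<open>M(z)\<close>; for \<open>\<tau>\<^sub>h\<^sup>4 \<le> 1 + 1/(3 \<kappa>\<^sup>2)\<close> every lattice vector
  other than \<open>\<plusminus>e, \<plusminus>f\<close> stays strictly longer than \<open>e\<close> and \<open>f\<close> there, so \<open>\<plusminus>e, \<plusminus>f\<close> belong to the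
  neighbour's coarse stencil, be it a reduced basis or an obtuse superbase. Summing, a coarse
  local energy is charged 5 times at its own point and, since its stencil has at most six
  directions, at most 12 times from neighbours: \<open>5 + 12 = 17\<close>.\<close>

lemma inner_vec2: "(x::real^2) \<bullet> y = x$1*y$1 + x$2*y$2"
  by (simp add: inner_vec_def sum_2)

lemma matrix_vector_mult_vec2: "((M::real^2^2) *v x)$i = M$i$1*x$1 + M$i$2*x$2"
  by (simp add: matrix_vector_mult_def sum_2)

lemma matrix_matrix_mult_vec2: "((A::real^2^2) ** B)$i$j = A$i$1*B$1$j + A$i$2*B$2$j"
  by (simp add: matrix_matrix_mult_def sum_2)

lemma norm_vec2_sq: "(norm (x::real^2))^2 = x$1^2 + x$2^2"
  unfolding power2_norm_eq_inner inner_vec2 by (simp add: power2_eq_square)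

lemma vec2_eq_iff: "(x::'a^2) = y \<longleftrightarrow> x$1 = y$1 \<and> x$2 = y$2"
  by (simp add: vec_eq_iff forall_2)

lemma matrix_inv_2x2:
  fixes A :: "real^2^2"
  defines "d \<equiv> A$1$1*A$2$2 - A$1$2*A$2$1"
  assumes "d \<noteq> 0"
  shows "matrix_inv A = vector[vector[A$2$2/d, -A$1$2/d], vector[-A$2$1/d, A$1$1/d]]"
proof -
  let ?B = "vector[vector[A$2$2/d, -A$1$2/d], vector[-A$2$1/d, A$1$1/d]] :: real^2^2"
  have AB: "A ** ?B = mat 1" and BA: "?B ** A = mat 1"
    using assms(2) by (simp_all add: vec2_eq_iff matrix_matrix_mult_vec2 mat_def divide_simps)
      (simp_all add: d_def algebra_simps)
  have inv: "A ** matrix_inv A = mat 1"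
    unfolding matrix_inv_def by (rule someI2_ex) (use AB BA in blast)+
  have "matrix_inv A = (?B ** A) ** matrix_inv A"
    by (simp only: BA matrix_mul_lid)
  also have "\<dots> = ?B"
    by (simp only: matrix_mul_assoc[symmetric] inv matrix_mul_rid)
  finally show ?thesis .
qed

definition bform :: "real^2^2 \<Rightarrow> real^2 \<Rightarrow> real^2 \<Rightarrow> real" where
  "bform M x y = x \<bullet> (M *v y)"

definition qform :: "real^2^2 \<Rightarrow> real^2 \<Rightarrow> real" where
  "qform M x = bform M x x"

definition cross2 :: "real^2 \<Rightarrow> real^2 \<Rightarrow> real" where
  "cross2 x y = x$1*y$2 - x$2*y$1"

lemma bform_expand:
  "bform M x y = M$1$1*x$1*y$1 + M$1$2*x$1*y$2 + M$2$1*x$2*y$1 + M$2$2*x$2*y$2"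
  by (simp add: bform_def inner_vec2 matrix_vector_mult_vec2 algebra_simps)

lemma Mnorm_eq_sqrt_qform: "Mnorm M e = sqrt (qform M e)"
  by (simp add: Mnorm_def qform_def bform_def)

lemma qform_lincomb:
  assumes "M$1$2 = M$2$1"
  shows "qform M (a *\<^sub>R e + b *\<^sub>R f) = a^2 * qform M e + 2*a*b * bform M e f + b^2 * qform M f"
  using assms by (simp add: qform_def bform_expand algebra_simps power2_eq_square)

lemma qform_scaleR: "qform M (a *\<^sub>R e) = a^2 * qform M e"
  by (simp add: qform_def bform_expand algebra_simps power2_eq_square)

lemma qform_scaleR_matrix: "x \<bullet> ((t *\<^sub>R M) *v x) = t * qform M x"
  by (simp add: qform_def bform_def scaleR_matrix_vector_assoc[symmetric])

lemma qform_gram: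
  assumes "M$1$2 = M$2$1"
  shows "qform M e * qform M f - (bform M e f)^2 = det M * (cross2 e f)^2"
  using assms by (simp add: qform_def bform_expand det_2 cross2_def algebra_simps power2_eq_square)

section \<open>Lattice bases\<close>

lemma Zvec_iff: "v \<in> Zvec \<longleftrightarrow> v$1 \<in> \<int> \<and> v$2 \<in> \<int>"
  by (simp add: Zvec_def forall_2)

lemma Zvec_closed [intro]:
  "0 \<in> Zvec"
  "x \<in> Zvec \<Longrightarrow> y \<in> Zvec \<Longrightarrow> x + y \<in> Zvec"
  "x \<in> Zvec \<Longrightarrow> y \<in> Zvec \<Longrightarrow> x - y \<in> Zvec"
  "x \<in> Zvec \<Longrightarrow> - x \<in> Zvec"
  "x \<in> Zvec \<Longrightarrow> of_int k *\<^sub>R x \<in> Zvec"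
  by (simp_all add: Zvec_iff)

lemma int_nonzero_sq_ge_1: "(a::int) \<noteq> 0 \<Longrightarrow> 1 \<le> (of_int a :: real)^2"
proof -
  assume "a \<noteq> 0"
  then have "1 \<le> \<bar>of_int a :: real\<bar>"
    by (metis of_int_1_le_iff of_int_abs zero_less_abs_iff int_one_le_iff_zero_less)
  then show ?thesis
    by (metis one_le_power power2_abs)
qed

lemma Zvec_norm_sq_ge_1: "v \<in> Zvec \<Longrightarrow> v \<noteq> 0 \<Longrightarrow> 1 \<le> (norm v)^2"
proof -
  assume v: "v \<in> Zvec" "v \<noteq> 0"
  obtain a b where ab: "v$1 = of_int a" "v$2 = of_int b"
    using v(1) unfolding Zvec_iff by (metis Ints_cases)
  have "a \<noteq> 0 \<or> b \<noteq> 0"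
    using v(2) ab by (auto simp: vec2_eq_iff)
  then show ?thesis
    using int_nonzero_sq_ge_1[of a] int_nonzero_sq_ge_1[of b]
    by (auto simp: norm_vec2_sq ab add_increasing add_increasing2)
qed

lemma finite_Zvec_ball: "finite {v \<in> Zvec. (norm v)^2 \<le> R}"
proof -
  define N where "N = \<lceil>sqrt \<bar>R\<bar>\<rceil>"
  let ?grid = "(\<lambda>(i,j). vector [of_int i, of_int j] :: real^2) ` ({-N..N} \<times> {-N..N})"
  have "{v \<in> Zvec. (norm v)^2 \<le> R} \<subseteq> ?grid"
  proof
    fix v assume v: "v \<in> {v \<in> Zvec. (norm v)^2 \<le> R}"
    obtain i j where ij: "v$1 = of_int i" "v$2 = of_int j"
      using v unfolding Zvec_iff by (auto elim!: Ints_cases)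
    have "norm v \<le> sqrt \<bar>R\<bar>"
      using v by (metis (mono_tags, lifting) abs_ge_self mem_Collect_eq norm_ge_zero
          real_sqrt_abs real_sqrt_le_mono order_trans)
    moreover have "\<bar>v$1\<bar> \<le> norm v" "\<bar>v$2\<bar> \<le> norm v"
      by (simp_all add: component_le_norm_cart)
    ultimately have "\<bar>of_int i :: real\<bar> \<le> of_int N" "\<bar>of_int j :: real\<bar> \<le> of_int N"
      using ij unfolding N_def by (smt (verit) le_of_int_ceiling)+
    then have "i \<in> {-N..N}" "j \<in> {-N..N}"
      by (simp_all add: abs_le_iff)
    moreover have "v = vector [of_int i, of_int j]"
      using ij by (simp add: vec2_eq_iff)
    ultimately show "v \<in> ?grid" by force
  qed
  then show ?thesis
    by (rule finite_subset) simp
qed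

lemma qform_argmin_Zvec:
  assumes c: "0 < c" and coercive: "\<forall>x. c * (norm x)^2 \<le> qform M x"
    and T: "T \<subseteq> Zvec" and v0: "v0 \<in> T"
  obtains e where "e \<in> T" "\<forall>v\<in>T. qform M e \<le> qform M v"
proof -
  define S where "S = {v \<in> T. qform M v \<le> qform M v0}"
  have "S \<subseteq> {v \<in> Zvec. (norm v)^2 \<le> qform M v0 / c}"
  proof
    fix v assume "v \<in> S"
    then have "v \<in> Zvec" "c * (norm v)^2 \<le> qform M v0"
      using S_def T coercive by (auto intro: order_trans)
    then show "v \<in> {v \<in> Zvec. (norm v)^2 \<le> qform M v0 / c}"
      using c by (simp add: field_simps)
  qed
  then have "finite S"
    using finite_Zvec_ball finite_subset by blast
  moreover have "v0 \<in> S"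
    using v0 S_def by simp
  ultimately obtain e where e: "e \<in> S" "\<forall>v\<in>S. qform M e \<le> qform M v"
    using ex_is_arg_min_if_finite[of S "qform M"] by (auto simp: is_arg_min_linorder)
  then have "\<forall>v\<in>T. qform M e \<le> qform M v"
    unfolding S_def by force
  then show ?thesis
    using that e S_def by blast
qed

lemma is_Zbasis_iff_cross2: "is_Zbasis x y \<longleftrightarrow> x \<in> Zvec \<and> y \<in> Zvec \<and> \<bar>cross2 x y\<bar> = 1"
  by (simp add: is_Zbasis_def cross2_def)

lemma is_Zbasis_commute: "is_Zbasis x y \<longleftrightarrow> is_Zbasis y x"
proof -
  have "cross2 y x = - cross2 x y"
    by (simp add: cross2_def)
  then show ?thesis
    unfolding is_Zbasis_iff_cross2 by auto
qed

lemma is_Zbasis_not_multiple: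
  assumes "is_Zbasis x y" "x' \<in> {x, - x}"
  shows "y \<notin> range (\<lambda>k::int. of_int k *\<^sub>R x')"
proof
  assume "y \<in> range (\<lambda>k::int. of_int k *\<^sub>R x')"
  then have "cross2 x y = 0"
    using assms(2) by (auto simp: cross2_def)
  then show False
    using assms(1) by (simp add: is_Zbasis_iff_cross2)
qed

lemma is_Zbasis_distinct:
  assumes "is_Zbasis x y"
  shows "x \<noteq> 0" "y \<noteq> x" "y \<noteq> - x"
  using assms by (auto simp: is_Zbasis_iff_cross2 cross2_def)

lemma is_Zbasis_coords:
  assumes "is_Zbasis e f" "v \<in> Zvec"
  obtains a b :: int where "v = of_int a *\<^sub>R e + of_int b *\<^sub>R f"
proof -
  obtain e1 e2 f1 f2 v1 v2 where i: "e$1 = of_int e1" "e$2 = of_int e2" "f$1 = of_int f1"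
    "f$2 = of_int f2" "v$1 = of_int v1" "v$2 = of_int v2"
    using assms unfolding is_Zbasis_def Zvec_iff by (metis Ints_cases)
  define d where "d = e1*f2 - e2*f1"
  have "\<bar>d\<bar> = 1"
    using assms(1) unfolding is_Zbasis_iff_cross2 cross2_def i d_def
    by (metis of_int_1 of_int_abs of_int_diff of_int_eq_iff of_int_mult)
  then have dd: "d*d = 1"
    by (metis abs_mult_self_eq mult_1_right)
  define a where "a = (v1 * f2 - v2 * f1) * d"
  define b where "b = (e1 * v2 - e2 * v1) * d"
  have "a * e1 + b * f1 = v1 * (d * d)" "a * e2 + b * f2 = v2 * (d * d)"
    unfolding a_def b_def d_def by (simp_all add: algebra_simps)
  then have "v = of_int a *\<^sub>R e + of_int b *\<^sub>R f"
    using dd by (simp add: vec2_eq_iff i) (metis of_int_add of_int_mult)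
  then show ?thesis
    using that by blast
qed

lemma is_Zbasis_multiple_eq:
  assumes "is_Zbasis x y" "x = of_int a *\<^sub>R w" "w \<in> Zvec"
  shows "x = w \<or> x = - w"
proof -
  have "cross2 x y = of_int a * cross2 w y"
    using assms(2) by (simp add: cross2_def algebra_simps)
  moreover obtain k where "cross2 w y = of_int k"
    using assms(1,3) unfolding is_Zbasis_iff_cross2 Zvec_iff cross2_def
    by (metis Ints_cases Ints_diff Ints_mult)
  ultimately have "\<bar>of_int (a * k) :: real\<bar> = 1"
    using assms(1) unfolding is_Zbasis_iff_cross2 by simp
  then have "\<bar>a\<bar> * \<bar>k\<bar> = 1"
    by (metis abs_mult of_int_abs of_int_eq_1_iff)
  then have "a = 1 \<or> a = -1"
    by (simp add: zmult_eq_1_iff) arith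
  then show ?thesis
    using assms(2) by auto
qed

section \<open>Existence of reduced bases\<close>

lemma Zvec_primitive_factor:
  assumes "e \<in> Zvec" "e \<noteq> 0"
  obtains g :: int and e' t where "0 < g" "e = of_int g *\<^sub>R e'" "e' \<in> Zvec" "t \<in> Zvec"
    "cross2 e' t = 1"
proof -
  obtain p q where pq: "e$1 = of_int p" "e$2 = of_int q"
    using assms(1) unfolding Zvec_iff by (metis Ints_cases)
  define g where "g = gcd p q"
  have pq0: "p \<noteq> 0 \<or> q \<noteq> 0"
    using assms(2) pq by (auto simp: vec2_eq_iff)
  then have g: "0 < g"
    by (simp add: g_def)
  define e' where "e' = (vector [of_int (p div g), of_int (q div g)] :: real^2)"
  have "p = g * (p div g)" "q = g * (q div g)"
    unfolding g_def by simp_all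
  then have "e = of_int g *\<^sub>R e'"
    unfolding e'_def using pq by (simp add: vec2_eq_iff) (metis of_int_mult)
  moreover have "gcd (p div g) (q div g) = 1"
    using div_gcd_coprime[OF pq0] g_def by simp
  then obtain s t where st: "s * (p div g) + t * (q div g) = 1"
    using bezout_int[of "p div g" "q div g"] by auto
  define t' where "t' = (vector [- of_int t, of_int s] :: real^2)"
  have "cross2 e' t' = of_int (s * (p div g) + t * (q div g))"
    unfolding cross2_def e'_def t'_def by (simp add: algebra_simps)
  ultimately show ?thesis
    using that[of g e' t'] g st by (simp add: e'_def t'_def Zvec_iff)
qed

lemma qform_minimal_completes_to_basis:
  assumes pos: "\<And>x. x \<noteq> 0 \<Longrightarrow> 0 < qform M x"
    and e: "e \<in> Zvec" "e \<noteq> 0" and min: "\<forall>v\<in>Zvec - {0}. qform M e \<le> qform M v"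
  obtains t where "t \<in> Zvec" "cross2 e t = 1"
proof -
  obtain g :: int and e' t where g: "0 < g" "e = of_int g *\<^sub>R e'" "e' \<in> Zvec" "t \<in> Zvec"
    "cross2 e' t = 1"
    using Zvec_primitive_factor[OF e] by blast
  have "e' \<noteq> 0"
    using e g by auto
  then have "(of_int g)^2 * qform M e' \<le> 1 * qform M e'" and "0 < qform M e'"
    using min g pos by (auto simp: qform_scaleR)
  then have "(of_int g :: real)^2 \<le> 1"
    by (meson mult_le_cancel_right)
  have "g = 1"
  proof (rule ccontr)
    assume "g \<noteq> 1"
    then have "(2::real)^2 \<le> (of_int g)^2"
      using g(1) by (intro power_mono) simp_all
    then show False
      using \<open>(of_int g :: real)^2 \<le> 1\<close> by simp
  qed
  then show ?thesis
    using that g by simp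
qed

lemma exists_size_reduced_partner:
  assumes "e \<in> Zvec" "t \<in> Zvec" "cross2 e t = 1" "0 < qform M e"
  obtains g where "g \<in> Zvec" "cross2 e g = 1" "\<bar>bform M e g\<bar> \<le> qform M e / 2"
proof -
  define E where "E = qform M e"
  define k where "k = - \<lfloor>bform M e t / E + 1/2\<rfloor>"
  define g where "g = t + of_int k *\<^sub>R e"
  have "bform M e g = bform M e t + of_int k * E"
    unfolding E_def g_def qform_def by (simp add: bform_expand algebra_simps)
  moreover have "-1/2 \<le> bform M e t / E + of_int k" "bform M e t / E + of_int k \<le> 1/2"
    unfolding k_def by linarith+
  ultimately have "- E / 2 \<le> bform M e g" "bform M e g \<le> E / 2"
    using assms(4) by (simp_all add: E_def field_simps)
  then have "\<bar>bform M e g\<bar> \<le> E / 2"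
    by (simp add: abs_le_iff)
  moreover have "cross2 e g = 1"
    using assms(3) by (simp add: g_def cross2_def algebra_simps)
  moreover have "g \<in> Zvec"
    using assms(1,2) by (auto simp: g_def)
  ultimately show ?thesis
    using that by (simp add: E_def)
qed

lemma qform_lincomb_gt_size_reduced:
  fixes \<alpha> \<beta> :: real
  assumes sym: "M$1$2 = M$2$1" and E: "0 < qform M e" and EG: "qform M e \<le> qform M g"
    and B: "\<bar>bform M e g\<bar> \<le> qform M e / 2" and \<beta>: "2 \<le> \<bar>\<beta>\<bar>"
  shows "qform M g < qform M (\<alpha> *\<^sub>R e + \<beta> *\<^sub>R g)"
proof -
  define E where "E = qform M e"
  define G where "G = qform M g"
  define B where "B = bform M e g"
  have "E * qform M (\<alpha> *\<^sub>R e + \<beta> *\<^sub>R g) = (\<alpha> * E + \<beta> * B)^2 + \<beta>^2 * (E * G - B^2)"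
    unfolding qform_lincomb[OF sym] E_def G_def B_def by (simp add: algebra_simps power2_eq_square)
  moreover have "\<bar>B\<bar>^2 \<le> (E / 2)^2"
    using B unfolding E_def B_def by (intro power_mono) simp_all
  then have B2: "B^2 \<le> E^2 / 4"
    by (simp add: power_divide)
  moreover have "4 \<le> \<beta>^2"
    using power_mono[OF \<beta>, of 2] by simp
  moreover have "0 < E" "E * E \<le> E * G"
    using E EG unfolding E_def G_def by simp_all
  moreover have "0 \<le> E * G - B^2"
    using B2 \<open>E * E \<le> E * G\<close> zero_le_square[of E] unfolding power2_eq_square by linarith
  ultimately have "4 * (E * G - B^2) \<le> \<beta>^2 * (E * G - B^2)"
    by (intro mult_right_mono)
  then have "4 * (E * G - B^2) \<le> E * qform M (\<alpha> *\<^sub>R e + \<beta> *\<^sub>R g)"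
    using \<open>E * qform M _ = _\<close> by (smt (verit) zero_le_power2)
  then have "E * G < E * qform M (\<alpha> *\<^sub>R e + \<beta> *\<^sub>R g)"
    using B2 \<open>E * E \<le> E * G\<close> mult_pos_pos[OF \<open>0 < E\<close> \<open>0 < E\<close>]
    unfolding power2_eq_square by argo
  then show ?thesis
    using \<open>0 < E\<close> unfolding G_def by simp
qed

lemma size_reduced_second_minimum:
  fixes \<alpha> \<beta> :: int
  assumes sym: "M$1$2 = M$2$1" and E: "0 < qform M e" "qform M e \<le> qform M g"
    and g: "cross2 e g = 1" "\<bar>bform M e g\<bar> \<le> qform M e / 2"
    and f: "f = of_int \<alpha> *\<^sub>R e + of_int \<beta> *\<^sub>R g" "\<beta> \<noteq> 0" "qform M f \<le> qform M g"
  shows "\<bar>cross2 e f\<bar> = 1"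
proof -
  have "\<not> 2 \<le> \<bar>of_int \<beta> :: real\<bar>"
    using qform_lincomb_gt_size_reduced[OF sym E g(2), of "of_int \<beta>" "of_int \<alpha>"] f(1,3)
    by auto
  then have "\<bar>\<beta>\<bar> = 1"
    using f(2) by linarith
  moreover have "cross2 e f = of_int \<beta>"
    using g(1) by (simp add: f(1) cross2_def algebra_simps)
  ultimately show ?thesis
    by simp
qed

lemma exists_reduced_basis:
  assumes sym: "M$1$2 = M$2$1" and c: "0 < c" and coercive: "\<forall>x. c * (norm x)^2 \<le> qform M x"
  shows "\<exists>e f. reduced_basis M e f"
proof -
  have pos: "0 < qform M x" if "x \<noteq> 0" for x
  proof -
    have "0 < c * (norm x)^2"
      using c that by simp
    then show ?thesis
      using coercive by (meson order_less_le_trans)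
  qed
  have "vector [1, 0] \<in> Zvec - {0}"
    by (simp add: Zvec_iff vec2_eq_iff)
  then obtain e where e: "e \<in> Zvec - {0}" and emin: "\<forall>v\<in>Zvec - {0}. qform M e \<le> qform M v"
    using qform_argmin_Zvec[OF c coercive, of "Zvec - {0}"] by blast
  then obtain t where "t \<in> Zvec" "cross2 e t = 1"
    using qform_minimal_completes_to_basis[OF pos] by blast
  then obtain g where g: "g \<in> Zvec" "cross2 e g = 1" "\<bar>bform M e g\<bar> \<le> qform M e / 2"
    using exists_size_reduced_partner e pos by blast
  have ge: "is_Zbasis e g"
    using e g by (simp add: is_Zbasis_iff_cross2)
  define T where "T = Zvec - range (\<lambda>k::int. of_int k *\<^sub>R e)"
  have "g \<in> T"
    using is_Zbasis_not_multiple[OF ge, of e] g T_def by simp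
  then obtain f where f: "f \<in> T" and fmin: "\<forall>v\<in>T. qform M f \<le> qform M v"
    using qform_argmin_Zvec[OF c coercive, of T] T_def by blast
  then obtain \<alpha> \<beta> :: int where f_eq: "f = of_int \<alpha> *\<^sub>R e + of_int \<beta> *\<^sub>R g"
    using is_Zbasis_coords[OF ge] T_def by blast
  moreover have "\<beta> \<noteq> 0"
    using f T_def f_eq by auto
  moreover have "qform M e \<le> qform M g" "qform M f \<le> qform M g"
    using emin g(1) is_Zbasis_distinct(1)[of g e] ge fmin \<open>g \<in> T\<close> by (auto simp: is_Zbasis_commute)
  ultimately have "\<bar>cross2 e f\<bar> = 1"
    using size_reduced_second_minimum[OF sym _ _ g(2,3)] e pos by blast
  then have "is_Zbasis e f"
    using e f T_def by (simp add: is_Zbasis_iff_cross2)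
  then show ?thesis
    unfolding reduced_basis_def Mnorm_eq_sqrt_qform real_sqrt_le_iff using emin fmin T_def by blast
qed

text \<open>Unlike reducedness, this strict minimality survives a small distortion of the metric.\<close>

definition strictly_reduced :: "real^2^2 \<Rightarrow> real^2 \<Rightarrow> real^2 \<Rightarrow> bool" where
  "strictly_reduced M e f \<longleftrightarrow> (\<forall>a b::int. a \<noteq> 0 \<longrightarrow> b \<noteq> 0 \<longrightarrow>
      qform M e < qform M (of_int a *\<^sub>R e + of_int b *\<^sub>R f) \<and>
      qform M f < qform M (of_int a *\<^sub>R e + of_int b *\<^sub>R f))"

lemma strictly_reduced_commute: "strictly_reduced M e f \<Longrightarrow> strictly_reduced M f e"
  unfolding strictly_reduced_def by (metis add.commute)

lemma strictly_reduced_shortest: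
  assumes ef: "is_Zbasis e f" and strict: "strictly_reduced M e f"
    and xy: "is_Zbasis x y" and x: "x \<notin> {e, -e, f, -f}"
  shows "qform M e < qform M x \<and> qform M f < qform M x"
proof -
  have "x \<in> Zvec" "e \<in> Zvec" "f \<in> Zvec"
    using xy ef by (simp_all add: is_Zbasis_def)
  then obtain a b where x_eq: "x = of_int a *\<^sub>R e + of_int b *\<^sub>R f"
    using is_Zbasis_coords[OF ef] by blast
  have "a \<noteq> 0"
  proof
    assume "a = 0"
    then have "x = of_int b *\<^sub>R f"
      using x_eq by simp
    then have "x = f \<or> x = - f"
      using is_Zbasis_multiple_eq[OF xy _ \<open>f \<in> Zvec\<close>] by blast
    then show False
      using x by blast
  qed
  moreover have "b \<noteq> 0"
  proof
    assume "b = 0"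
    then have "x = of_int a *\<^sub>R e"
      using x_eq by simp
    then have "x = e \<or> x = - e"
      using is_Zbasis_multiple_eq[OF xy _ \<open>e \<in> Zvec\<close>] by blast
    then show False
      using x by blast
  qed
  ultimately show ?thesis
    using strict x_eq unfolding strictly_reduced_def by blast
qed

lemma strictly_reduced_subset_reduced_basis:
  assumes ef: "is_Zbasis e f" and strict: "strictly_reduced M e f" and red: "reduced_basis M e' f'"
  shows "{e, -e, f, -f} \<subseteq> {e', -e', f', -f'}"
proof -
  have ef': "is_Zbasis e' f'" and min1: "\<forall>v\<in>Zvec - {0}. qform M e' \<le> qform M v"
    and min2: "\<forall>v\<in>Zvec - range (\<lambda>k::int. of_int k *\<^sub>R e'). qform M f' \<le> qform M v"
    using red unfolding reduced_basis_def Mnorm_eq_sqrt_qform real_sqrt_le_iff by auto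
  have fe: "is_Zbasis f e"
    using ef is_Zbasis_commute by blast
  have Z: "e \<in> Zvec" "f \<in> Zvec" "e \<noteq> 0" "f \<noteq> 0"
    using ef is_Zbasis_distinct(1)[OF ef] is_Zbasis_distinct(1)[OF fe]
    by (simp_all add: is_Zbasis_def)
  have e': "e' \<in> {e, -e, f, -f}"
  proof (rule ccontr)
    assume "e' \<notin> {e, -e, f, -f}"
    then have "qform M e < qform M e'"
      using strictly_reduced_shortest[OF ef strict ef'] by blast
    then show False
      using min1 Z by force
  qed
  have "\<exists>d\<in>{e, f}. d \<in> Zvec - range (\<lambda>k::int. of_int k *\<^sub>R e')"
    using e' Z is_Zbasis_not_multiple[OF ef, of e'] is_Zbasis_not_multiple[OF fe, of e'] by blast
  then have "f' \<in> {e, -e, f, -f}"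
    using strictly_reduced_shortest[OF ef strict, of f' e'] ef' min2 is_Zbasis_commute
    by force
  then show ?thesis
    using e' is_Zbasis_distinct[OF ef'] is_Zbasis_distinct[OF ef]
    by (auto simp: minus_equation_iff)
qed

lemma obtuse_superbase_shortest:
  fixes a1 a2 :: int
  assumes sym: "M$1$2 = M$2$1" and sb: "obtuse_superbase M e0 e1 e2"
    and a: "a1 \<noteq> 0" "a2 \<noteq> 0" "a1 \<noteq> a2"
  shows "qform M e1 \<le> qform M (of_int a1 *\<^sub>R e1 + of_int a2 *\<^sub>R e2)"
    and "qform M e2 \<le> qform M (of_int a1 *\<^sub>R e1 + of_int a2 *\<^sub>R e2)"
proof -
  define Q1 where "Q1 = qform M e1"
  define Q2 where "Q2 = qform M e2"
  define B where "B = bform M e1 e2"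
  define x where "x = (of_int a1 :: real)"
  define y where "y = (of_int a2 :: real)"
  have e0: "e0 = - e1 - e2"
    using sb unfolding obtuse_superbase_def by (simp add: algebra_simps eq_neg_iff_add_eq_0)
  have obtuse: "0 \<le> Q1 + B" "0 \<le> Q2 + B" "B \<le> 0"
    using sb sym unfolding obtuse_superbase_def e0 Q1_def Q2_def B_def qform_def
    by (simp_all add: bform_def[symmetric] bform_expand algebra_simps)
  have q: "qform M (of_int a1 *\<^sub>R e1 + of_int a2 *\<^sub>R e2) = x^2 * Q1 + 2 * x * y * B + y^2 * Q2"
    unfolding qform_lincomb[OF sym] Q1_def Q2_def B_def x_def y_def by simp
  have "1 \<le> x^2" "1 \<le> y^2" "1 \<le> (x - y)^2"
    using a int_nonzero_sq_ge_1[of a1] int_nonzero_sq_ge_1[of a2] int_nonzero_sq_ge_1[of "a1 - a2"]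
    unfolding x_def y_def by simp_all
  moreover have "0 \<le> x^2 * (Q1 + B)" "0 \<le> y^2 * (Q2 + B)"
    using obtuse by simp_all
  ultimately have "0 \<le> (x^2 - 1) * (Q1 + B)" "0 \<le> (y^2 - 1) * (Q2 + B)"
    "0 \<le> ((x - y)^2 - 1) * (- B)"
    using obtuse by (simp_all add: mult_nonneg_nonpos)
  note nonneg = this \<open>0 \<le> x^2 * (Q1 + B)\<close> \<open>0 \<le> y^2 * (Q2 + B)\<close>
  have d1: "qform M (of_int a1 *\<^sub>R e1 + of_int a2 *\<^sub>R e2) - Q1
      = (x^2 - 1) * (Q1 + B) + y^2 * (Q2 + B) + ((x - y)^2 - 1) * (- B)"
    and d2: "qform M (of_int a1 *\<^sub>R e1 + of_int a2 *\<^sub>R e2) - Q2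
      = x^2 * (Q1 + B) + (y^2 - 1) * (Q2 + B) + ((x - y)^2 - 1) * (- B)"
    unfolding q by (simp_all add: algebra_simps power2_eq_square)
  show "qform M e1 \<le> qform M (of_int a1 *\<^sub>R e1 + of_int a2 *\<^sub>R e2)"
    using d1 nonneg(1,3,5) Q1_def by linarith
  show "qform M e2 \<le> qform M (of_int a1 *\<^sub>R e1 + of_int a2 *\<^sub>R e2)"
    using d2 nonneg(2,3,4) Q2_def by linarith
qed

lemma strictly_reduced_mem_obtuse_superbase:
  assumes ef: "is_Zbasis e f" and strict: "strictly_reduced M e f" and sym: "M$1$2 = M$2$1"
    and sb: "obtuse_superbase M e0 e1 e2"
  shows "e \<in> {e0, -e0, e1, -e1, e2, -e2}"
proof (rule ccontr)
  assume e: "e \<notin> {e0, -e0, e1, -e1, e2, -e2}"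
  have e0: "e0 = - e1 - e2" and b12: "is_Zbasis e1 e2"
    using sb unfolding obtuse_superbase_def by (auto simp: algebra_simps eq_neg_iff_add_eq_0)
  then have b21: "is_Zbasis e2 e1" and Z: "e1 \<in> Zvec" "e2 \<in> Zvec" "e0 \<in> Zvec"
    using is_Zbasis_commute by (auto simp: is_Zbasis_def)
  obtain a1 a2 :: int where e_eq: "e = of_int a1 *\<^sub>R e1 + of_int a2 *\<^sub>R e2"
    using is_Zbasis_coords[OF b12] ef by (auto simp: is_Zbasis_def)
  have multiple: "e = w \<or> e = - w" if "e = of_int a *\<^sub>R w" "w \<in> Zvec" for a w
    using is_Zbasis_multiple_eq[OF ef that] .
  have "a1 \<noteq> 0"
    using multiple[of a2 e2] e e_eq Z by auto
  moreover have "a2 \<noteq> 0"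
    using multiple[of a1 e1] e e_eq Z by auto
  moreover have "a1 \<noteq> a2"
    using multiple[of "- a1" e0] e e_eq Z e0 by (auto simp: algebra_simps)
  ultimately have le: "qform M e1 \<le> qform M e" "qform M e2 \<le> qform M e"
    using obtuse_superbase_shortest[OF sym sb] e_eq by blast+
  have "e1 \<in> {e, -e, f, -f}" "e2 \<in> {e, -e, f, -f}"
    using strictly_reduced_shortest[OF ef strict b12] strictly_reduced_shortest[OF ef strict b21] le
    by force+
  then have "e1 \<in> {f, -f}" "e2 \<in> {f, -f}"
    using e by auto
  then show False
    using is_Zbasis_distinct[OF b12] by auto
qed

lemma strictly_reduced_subset_obtuse_superbase:
  assumes "is_Zbasis e f" "strictly_reduced M e f" "M$1$2 = M$2$1" "obtuse_superbase M e0 e1 e2"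
  shows "{e, -e, f, -f} \<subseteq> {e0, -e0, e1, -e1, e2, -e2}"
proof -
  have "is_Zbasis f e" "strictly_reduced M f e"
    using assms(1,2) is_Zbasis_commute strictly_reduced_commute by blast+
  then show ?thesis
    using strictly_reduced_mem_obtuse_superbase[OF assms]
      strictly_reduced_mem_obtuse_superbase[of f e, OF _ _ assms(3,4)] by auto
qed

section \<open>The metric field\<close>

lemma S2plus_entries:
  assumes "A \<in> S2plus"
  shows "A$1$2 = A$2$1" "0 < A$1$1" "0 < det A" "0 \<le> x \<bullet> (A *v x)"
proof -
  have tr: "transpose A = A" and pd: "\<And>x::real^2. x \<noteq> 0 \<Longrightarrow> 0 < x \<bullet> (A *v x)"
    using assms unfolding S2plus_def by auto
  have "(transpose A)$1$2 = A$2$1"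
    by (simp add: transpose_def)
  then show sym: "A$1$2 = A$2$1"
    using tr by simp
  have "0 < (vector [1,0] :: real^2) \<bullet> (A *v vector [1,0])"
    using pd by (simp add: vec2_eq_iff)
  then show pos: "0 < A$1$1"
    by (simp add: inner_vec2 matrix_vector_mult_vec2)
  have "0 < (vector [- A$1$2, A$1$1] :: real^2) \<bullet> (A *v vector [- A$1$2, A$1$1])"
    using pd pos by (simp add: vec2_eq_iff)
  then have "0 < A$1$1 * det A"
    using sym by (simp add: inner_vec2 matrix_vector_mult_vec2 det_2 algebra_simps)
  then show "0 < det A"
    using pos by (simp add: zero_less_mult_iff)
  show "0 \<le> x \<bullet> (A *v x)"
    using pd[of x] by (cases "x = 0") auto
qed

lemma inner_matrix_le_onorm: "x \<bullet> ((A::real^2^2) *v x) \<le> onorm ((*v) A) * (norm x)^2"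
proof -
  have "x \<bullet> (A *v x) \<le> norm x * norm (A *v x)"
    by (rule norm_cauchy_schwarz)
  also have "\<dots> \<le> norm x * (onorm ((*v) A) * norm x)"
    by (rule mult_left_mono) (simp_all add: onorm matrix_vector_mul_bounded_linear)
  finally show ?thesis
    by (simp add: power2_eq_square algebra_simps)
qed

definition rot90 :: "real^2 \<Rightarrow> real^2" where
  "rot90 x = vector [- x$2, x$1]"

lemma norm_rot90 [simp]: "norm (rot90 x) = norm x"
  by (simp add: norm_eq_sqrt_inner inner_vec2 rot90_def add.commute)

lemma Mof_entries:
  assumes "D z \<in> S2plus"
  shows "Mof D z $1$1 = D z$2$2 / sqrt (det (D z))" "Mof D z $1$2 = - D z$1$2 / sqrt (det (D z))"
    "Mof D z $2$1 = - D z$2$1 / sqrt (det (D z))" "Mof D z $2$2 = D z$1$1 / sqrt (det (D z))"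
proof -
  define A where "A = D z"
  have d: "0 < det A"
    using S2plus_entries(3)[OF assms(1)] A_def by simp
  then have "matrix_inv A = vector[vector[A$2$2/det A, -A$1$2/det A], vector[-A$2$1/det A, A$1$1/det A]]"
    using matrix_inv_2x2[of A] by (simp add: det_2)
  moreover have "sqrt (det A) * (t / det A) = t / sqrt (det A)" for t
    using d by (simp add: field_simps)
  ultimately show "Mof D z $1$1 = D z$2$2 / sqrt (det (D z))" "Mof D z $1$2 = - D z$1$2 / sqrt (det (D z))"
    "Mof D z $2$1 = - D z$2$1 / sqrt (det (D z))" "Mof D z $2$2 = D z$1$1 / sqrt (det (D z))"
    unfolding Mof_def A_def[symmetric] by simp_all
qed

lemma Mof_symmetric: "D z \<in> S2plus \<Longrightarrow> Mof D z $1$2 = Mof D z $2$1"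
  by (simp add: Mof_entries S2plus_entries(1))

lemma det_Mof:
  assumes "D z \<in> S2plus"
  shows "det (Mof D z) = 1"
proof -
  have "det (Mof D z) = det (D z) / (sqrt (det (D z)) * sqrt (det (D z)))"
    using assms by (simp add: det_2 Mof_entries S2plus_entries(1) diff_divide_distrib)
  then show ?thesis
    using S2plus_entries(3)[OF assms] by simp
qed

lemma qform_Mof_eq_rot90:
  "D z \<in> S2plus \<Longrightarrow> qform (Mof D z) x = rot90 x \<bullet> (D z *v rot90 x) / sqrt (det (D z))"
  by (simp add: qform_def bform_expand Mof_entries S2plus_entries(1) rot90_def inner_vec2
      matrix_vector_mult_vec2 add_divide_distrib diff_divide_distrib algebra_simps)

lemma qform_Mof_eq_inverse:
  assumes "D z \<in> S2plus"
  shows "qform (Mof D z) x = sqrt (det (D z)) * (x \<bullet> (matrix_inv (D z) *v x))"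
proof -
  have "0 < det (D z)"
    using S2plus_entries(3)[OF assms] .
  moreover have "matrix_inv (D z) = vector[vector[D z$2$2/det (D z), -D z$1$2/det (D z)],
      vector[-D z$2$1/det (D z), D z$1$1/det (D z)]]"
    using calculation matrix_inv_2x2[of "D z"] by (simp add: det_2)
  ultimately show ?thesis
    using S2plus_entries(1)[OF assms]
    by (simp add: qform_def bform_expand Mof_entries[of D z, OF assms] inner_vec2 matrix_vector_mult_vec2
        field_simps power2_eq_square)
qed

lemma qform_Mof_nonneg:
  assumes "D z \<in> S2plus"
  shows "0 \<le> qform (Mof D z) x"
  unfolding qform_Mof_eq_rot90[of D z, OF assms]
  using S2plus_entries(3,4)[OF assms] by (simp add: divide_nonneg_pos)

lemma norm_pow4_le_inner_inverse:
  assumes "A \<in> S2plus"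
  shows "(norm x)^4 \<le> (x \<bullet> (A *v x)) * (x \<bullet> (matrix_inv A *v x))"
proof -
  define d where "d = det A"
  define N where "N = A$2$2 * x$1^2 - 2 * A$1$2 * x$1 * x$2 + A$1$1 * x$2^2"
  have d: "0 < d"
    using S2plus_entries(3)[OF assms] d_def by simp
  then have "matrix_inv A = vector[vector[A$2$2/d, -A$1$2/d], vector[-A$2$1/d, A$1$1/d]]"
    using matrix_inv_2x2[of A] by (simp add: det_2 d_def)
  then have inv: "x \<bullet> (matrix_inv A *v x) = N / d"
    using S2plus_entries(1)[OF assms]
    by (simp add: inner_vec2 matrix_vector_mult_vec2 N_def add_divide_distrib diff_divide_distrib
        power2_eq_square algebra_simps)
  have "(norm x)^4 = (x$1^2 + x$2^2)^2"
    by (simp flip: norm_vec2_sq)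
  then have "(x \<bullet> (A *v x)) * N - d * (norm x)^4
      = (A$1$2 * (x$1^2 - x$2^2) + (A$2$2 - A$1$1) * x$1 * x$2)^2"
    using S2plus_entries(1)[OF assms]
    by (simp add: inner_vec2 matrix_vector_mult_vec2 N_def d_def det_2 algebra_simps
        power2_eq_square power4_eq_xxxx)
  then have "(norm x)^4 * d \<le> (x \<bullet> (A *v x)) * N"
    by (metis diff_ge_0_iff_ge mult.commute zero_le_power2)
  then show ?thesis
    using d unfolding inv by (simp add: pos_le_divide_eq)
qed

lemma qform_Mof_rot90:
  "D z \<in> S2plus \<Longrightarrow> qform (Mof D z) (rot90 x) = x \<bullet> (D z *v x) / sqrt (det (D z))"
  by (simp add: qform_def bform_expand Mof_entries S2plus_entries(1) rot90_def inner_vec2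
      matrix_vector_mult_vec2 add_divide_distrib diff_divide_distrib algebra_simps)

lemma cond_num_nonneg: "0 \<le> cond_num A"
  by (simp add: cond_num_def onorm_pos_le matrix_vector_mul_bounded_linear)

lemma cond_num_sq:
  "(cond_num A)^2 = onorm ((*v) A) * onorm ((*v) (matrix_inv A))"
  unfolding cond_num_def by (simp add: onorm_pos_le matrix_vector_mul_bounded_linear)

lemma qform_Mof_le_cond_num:
  assumes "D z \<in> S2plus"
  shows "qform (Mof D z) x \<le> cond_num (D z) * (norm x)^2"
proof -
  define A where "A = D z"
  define I where "I = matrix_inv A"
  have s: "0 < sqrt (det A)"
    using S2plus_entries(3)[OF assms] A_def by simp
  have "0 \<le> x \<bullet> (I *v x)"
    using qform_Mof_nonneg[of D z, OF assms] qform_Mof_eq_inverse[of D z, OF assms] s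
    by (simp add: A_def I_def zero_le_mult_iff)
  have "(qform (Mof D z) x)^2
      = (rot90 x \<bullet> (A *v rot90 x) / sqrt (det A)) * (sqrt (det A) * (x \<bullet> (I *v x)))"
    using qform_Mof_eq_rot90[of D z, OF assms] qform_Mof_eq_inverse[of D z, OF assms]
    unfolding power2_eq_square A_def I_def by metis
  also have "\<dots> = (rot90 x \<bullet> (A *v rot90 x)) * (x \<bullet> (I *v x))"
    using s by simp
  also have "\<dots> \<le> (onorm ((*v) A) * (norm x)^2) * (onorm ((*v) I) * (norm x)^2)"
    using inner_matrix_le_onorm[of "rot90 x" A] inner_matrix_le_onorm[of x I] \<open>0 \<le> x \<bullet> (I *v x)\<close>
      S2plus_entries(4)[of A "rot90 x"] assms A_def
    by (intro mult_mono) (simp_all add: onorm_pos_le matrix_vector_mul_bounded_linear)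
  also have "\<dots> = (cond_num (D z) * (norm x)^2)^2"
    unfolding power_mult_distrib cond_num_sq A_def I_def by (simp add: algebra_simps)

  finally show ?thesis
    by (rule power2_le_imp_le) (simp add: cond_num_nonneg)
qed

lemma norm_sq_le_cond_num_qform_Mof:
  assumes "D z \<in> S2plus"
  shows "(norm x)^2 \<le> cond_num (D z) * qform (Mof D z) x"
proof (cases "x = 0")
  case False
  have s: "0 < sqrt (det (D z))"
    using S2plus_entries(3)[OF assms] by simp
  have "(norm x)^2 * (norm x)^2 \<le> (x \<bullet> (D z *v x)) * (x \<bullet> (matrix_inv (D z) *v x))"
    using norm_pow4_le_inner_inverse[OF assms, of x] by (simp add: power4_eq_xxxx power2_eq_square)
  also have "\<dots> = qform (Mof D z) (rot90 x) * qform (Mof D z) x"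
    using qform_Mof_rot90[of D z, OF assms] qform_Mof_eq_inverse[of D z, OF assms] s
    by simp
  also have "\<dots> \<le> (cond_num (D z) * (norm x)^2) * qform (Mof D z) x"
    using qform_Mof_le_cond_num[of D z, OF assms, of "rot90 x"] qform_Mof_nonneg[of D z, OF assms]
    by (intro mult_right_mono) simp_all
  finally have "(norm x)^2 * (norm x)^2 \<le> (cond_num (D z) * qform (Mof D z) x) * (norm x)^2"
    by (simp only: mult_ac)
  moreover have "0 < (norm x)^2"
    using False by simp
  ultimately show ?thesis
    by (rule mult_right_le_imp_le)
qed (simp add: qform_def bform_def)

lemma cond_num_ge_1:
  assumes "A \<in> S2plus"
  shows "1 \<le> cond_num A"
proof -
  define x :: "real^2" where "x = vector [1, 0]"
  have n: "norm x = 1"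
    by (simp add: norm_eq_sqrt_inner inner_vec2 x_def)
  have "1 \<le> cond_num A * qform (Mof (\<lambda>_. A) 0) x" "qform (Mof (\<lambda>_. A) 0) x \<le> cond_num A"
    using norm_sq_le_cond_num_qform_Mof[of "\<lambda>_. A" 0 x] qform_Mof_le_cond_num[of "\<lambda>_. A" 0 x] assms n
    by simp_all
  moreover have K: "0 \<le> cond_num A"
    by (rule cond_num_nonneg)
  ultimately have "1 \<le> cond_num A * cond_num A"
    by (meson mult_left_mono order_trans)
  show ?thesis
  proof (rule ccontr)
    assume "\<not> 1 \<le> cond_num A"
    then have "cond_num A * cond_num A < 1"
      using K by (metis less_eq_real_def linorder_not_le mult_le_one mult_less_cancel_right1
          mult_nonneg_nonneg)
    then show False
      using \<open>1 \<le> cond_num A * cond_num A\<close> by simp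
  qed
qed

definition vec_frac :: "real^2 \<Rightarrow> real^2" where
  "vec_frac z = (\<chi> i. frac (z$i))"

lemma vec_frac_diff_Zvec: "z - vec_frac z \<in> Zvec"
  by (simp add: Zvec_def vec_frac_def frac_def)

lemma vec_frac_bounds: "0 \<le> vec_frac z $ i" "vec_frac z $ i < 1"
  by (simp_all add: vec_frac_def frac_lt_1)

lemma periodic_vec_frac:
  assumes "\<forall>z v. v \<in> Zvec \<longrightarrow> g (z + v) = g z"
  shows "g (vec_frac z) = g z"
  using assms vec_frac_diff_Zvec[of z] by (metis add_diff_cancel_left' add_diff_eq)

lemma continuous_periodic_attains_max:
  fixes g :: "real^2 \<Rightarrow> real"
  assumes cont: "continuous_on UNIV g" and per: "\<forall>z v. v \<in> Zvec \<longrightarrow> g (z + v) = g z"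
  obtains z0 where "\<forall>z. g z \<le> g z0"
proof -
  have ne: "cbox (0::real^2) 1 \<noteq> {}"
    using mem_box_cart(2)[of 0 0 1] by auto
  obtain z0 where "\<forall>y\<in>cbox 0 1. g y \<le> g z0"
    using continuous_attains_sup[OF compact_cbox ne continuous_on_subset[OF cont]] by blast
  moreover have "vec_frac z \<in> cbox 0 1" for z
    using vec_frac_bounds[of z] by (simp add: mem_box_cart less_imp_le)
  ultimately show ?thesis
    using that periodic_vec_frac[OF per] by metis
qed

lemma onorm_matrix_le_entries:
  "onorm ((*v) (A::real^2^2)) \<le> \<bar>A$1$1\<bar> + \<bar>A$1$2\<bar> + \<bar>A$2$1\<bar> + \<bar>A$2$2\<bar>"
proof (rule onorm_le)
  fix x :: "real^2"
  have c: "\<bar>x$1\<bar> \<le> norm x" "\<bar>x$2\<bar> \<le> norm x"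
    by (simp_all add: component_le_norm_cart)
  have "norm (A *v x) \<le> \<bar>(A *v x)$1\<bar> + \<bar>(A *v x)$2\<bar>"
    using norm_le_l1_cart[of "A *v x"] by (simp add: sum_2)
  also have "\<dots> \<le> (\<bar>A$1$1\<bar> * \<bar>x$1\<bar> + \<bar>A$1$2\<bar> * \<bar>x$2\<bar>) + (\<bar>A$2$1\<bar> * \<bar>x$1\<bar> + \<bar>A$2$2\<bar> * \<bar>x$2\<bar>)"
    unfolding matrix_vector_mult_vec2 by (intro add_mono) (simp_all add: abs_triangle_ineq[THEN order_trans] abs_mult
        order_trans[OF abs_triangle_ineq])
  also have "\<dots> \<le> (\<bar>A$1$1\<bar> * norm x + \<bar>A$1$2\<bar> * norm x) + (\<bar>A$2$1\<bar> * norm x + \<bar>A$2$2\<bar> * norm x)"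
    using c by (intro add_mono mult_left_mono) simp_all
  finally show "norm (A *v x) \<le> (\<bar>A$1$1\<bar> + \<bar>A$1$2\<bar> + \<bar>A$2$1\<bar> + \<bar>A$2$2\<bar>) * norm x"
    by (simp add: algebra_simps)
qed

lemma cond_num_bounded:
  assumes cont: "continuous_on UNIV D" and spd: "\<forall>z. D z \<in> S2plus"
    and per: "\<forall>z v. v \<in> Zvec \<longrightarrow> D (z + v) = D z"
  shows "bdd_above (range (\<lambda>z. cond_num (D z)))"
proof -
  obtain z1 where z1: "\<forall>z. norm (D z) \<le> norm (D z1)"
    using continuous_periodic_attains_max[of "\<lambda>z. norm (D z)"] cont per
    by (metis continuous_on_norm)
  define R where "R = norm (D z1)"
  have entry: "\<bar>D z $ i $ j\<bar> \<le> R" for z i j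
    using z1[rule_format, of z] Finite_Cartesian_Product.norm_nth_le[of "D z $ i" j]
      Finite_Cartesian_Product.norm_nth_le[of "D z" i] R_def
    by (simp add: real_norm_def)
  have "continuous_on UNIV (\<lambda>z. - det (D z))"
    unfolding det_2 by (intro continuous_intros cont)
  then obtain z2 where z2: "\<forall>z. det (D z2) \<le> det (D z)"
    using continuous_periodic_attains_max[of "\<lambda>z. - det (D z)"] per by (metis neg_le_iff_le)
  define \<delta> where "\<delta> = det (D z2)"
  have \<delta>: "0 < \<delta>" "\<And>z. \<delta> \<le> det (D z)"
    using S2plus_entries(3) spd z2 \<delta>_def by auto
  have "cond_num (D z) \<le> sqrt ((4 * R) * (4 * R / \<delta>))" for z
  proof -
    define A where "A = D z"
    have d: "\<delta> \<le> det A" "0 < det A"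
      using \<delta>(1) \<delta>(2)[of z] A_def by auto
    have inv_entry: "\<bar>A $ i $ j / det A\<bar> \<le> R / \<delta>" for i j
      using entry[of z i j] d \<delta>(1) unfolding A_def[symmetric]
      by (simp add: abs_div frac_le)
    have "onorm ((*v) A) \<le> 4 * R"
      using onorm_matrix_le_entries[of A] entry[of z 1 1] entry[of z 1 2] entry[of z 2 1]
        entry[of z 2 2] unfolding A_def[symmetric] by linarith
    moreover have "onorm ((*v) (matrix_inv A)) \<le> 4 * R / \<delta>"
      using onorm_matrix_le_entries[of "matrix_inv A"] inv_entry[of 1 1] inv_entry[of 1 2]
        inv_entry[of 2 1] inv_entry[of 2 2] d matrix_inv_2x2[of A]
      by (simp add: det_2)
    ultimately have "onorm ((*v) A) * onorm ((*v) (matrix_inv A)) \<le> (4 * R) * (4 * R / \<delta>)"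
      using R_def by (intro mult_mono) (simp_all add: onorm_pos_le matrix_vector_mul_bounded_linear)
    then show ?thesis
      unfolding cond_num_def A_def by (rule real_sqrt_le_mono)
  qed
  then show ?thesis
    by (intro bdd_aboveI[of _ "sqrt ((4 * R) * (4 * R / \<delta>))"]) auto
qed

lemma cond_num_le_kappa_bold:
  assumes "continuous_on UNIV D" "\<forall>z. D z \<in> S2plus" "\<forall>z v. v \<in> Zvec \<longrightarrow> D (z + v) = D z"
  shows "cond_num (D z) \<le> kappa_bold D"
  unfolding kappa_bold_def using cond_num_bounded[OF assms] by (rule cSup_upper[OF rangeI])

lemma qform_Mof_le_kappa:
  assumes "D z \<in> S2plus" "cond_num (D z) \<le> \<kappa>"
  shows "qform (Mof D z) x \<le> \<kappa> * (norm x)^2" "(norm x)^2 \<le> \<kappa> * qform (Mof D z) x"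
  using qform_Mof_le_cond_num[of D z x] norm_sq_le_cond_num_qform_Mof[of D z x]
    qform_Mof_nonneg[of D z x] assms
  by (smt (verit) mult_right_mono zero_le_power2)+

lemma Least_real_closed:
  fixes P :: "real \<Rightarrow> bool"
  assumes "closed {t. P t}" "bdd_below {t. P t}" "P t0"
  shows "P (LEAST t. P t)" "(LEAST t. P t) \<le> t0"
proof -
  have "Inf {t. P t} \<in> {t. P t}"
    using assms by (intro closed_contains_Inf) auto
  moreover have "Inf {t. P t} \<le> t" if "P t" for t
    using assms(2) that by (simp add: cInf_lower)
  ultimately have "(LEAST t. P t) = Inf {t. P t}"
    by (intro Least_equality) auto
  then show "P (LEAST t. P t)" "(LEAST t. P t) \<le> t0"
    using \<open>Inf {t. P t} \<in> {t. P t}\<close> \<open>\<And>t. P t \<Longrightarrow> Inf {t. P t} \<le> t\<close> assms(3) by auto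
qed

lemma tau_pq_bounds:
  assumes spd: "\<forall>z. D z \<in> S2plus" and kappa: "\<forall>z. cond_num (D z) \<le> \<kappa>"
  shows "1 \<le> tau_pq D p q" "tau_pq D p q \<le> \<kappa>"
    "qform (Mof D p) x \<le> (tau_pq D p q)^2 * qform (Mof D q) x"
    "qform (Mof D q) x \<le> (tau_pq D p q)^2 * qform (Mof D p) x"
proof -
  define P where "P t \<longleftrightarrow> 1 \<le> t \<and> (\<forall>x. qform (Mof D p) x \<le> t^2 * qform (Mof D q) x)
    \<and> (\<forall>x. qform (Mof D q) x \<le> t^2 * qform (Mof D p) x)" for t
  have "tau_pq D p q = (LEAST t. P t)"
    unfolding tau_pq_def P_def loewner_le_def qform_scaleR_matrix
    by (rule arg_cong[where f = Least]) (auto simp: fun_eq_iff qform_def bform_def field_simps)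
  moreover have "closed {t. P t}"
    unfolding P_def by (intro closed_Collect_conj closed_Collect_all closed_Collect_le continuous_intros)
  moreover have "bdd_below {t. P t}"
    unfolding P_def by (auto intro: bdd_belowI)
  moreover have "P \<kappa>"
  proof -
    have "1 \<le> \<kappa>"
      using cond_num_ge_1 spd kappa order_trans by blast
    moreover have "qform (Mof D z) x \<le> \<kappa>^2 * qform (Mof D z') x" for z z' x
      using qform_Mof_le_kappa[of D z \<kappa> x] qform_Mof_le_kappa[of D z' \<kappa> x] spd kappa \<open>1 \<le> \<kappa>\<close>
      by (smt (verit) mult_left_mono power2_eq_square mult.assoc)
    ultimately show ?thesis
      unfolding P_def by blast
  qed
  ultimately have "P (tau_pq D p q)" "tau_pq D p q \<le> \<kappa>"
    using Least_real_closed[of P \<kappa>] by simp_all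
  then show "1 \<le> tau_pq D p q" "tau_pq D p q \<le> \<kappa>"
    "qform (Mof D p) x \<le> (tau_pq D p q)^2 * qform (Mof D q) x"
    "qform (Mof D q) x \<le> (tau_pq D p q)^2 * qform (Mof D p) x"
    unfolding P_def by blast+
qed

lemma tau_pq_le_tau_h:
  assumes "\<forall>z. D z \<in> S2plus" "\<forall>z. cond_num (D z) \<le> kappa_bold D"
    and "norm (p - q) \<le> 2 * kappa_bold D * h"
  shows "tau_pq D p q \<le> tau_h D h"
proof -
  have "bdd_above {tau_pq D p q | p q. norm (p - q) \<le> 2 * kappa_bold D * h}"
    using tau_pq_bounds(2)[OF assms(1,2)] by (auto intro!: bdd_aboveI)
  then show ?thesis
    unfolding tau_h_def using assms(3) by (auto intro!: cSup_upper)
qed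

section \<open>Stability of reduced bases under a small distortion\<close>

lemma reduced_basis_qform:
  assumes sym: "M$1$2 = M$2$1" and det: "det M = 1" and red: "reduced_basis M e f"
  shows "qform M e \<le> qform M f" "qform M e * qform M f = 1 + (bform M e f)^2"
proof -
  have ef: "is_Zbasis e f" and min: "\<forall>v\<in>Zvec - {0}. qform M e \<le> qform M v"
    using red unfolding reduced_basis_def Mnorm_eq_sqrt_qform real_sqrt_le_iff by auto
  have "is_Zbasis f e"
    using ef is_Zbasis_commute by blast
  then have "f \<in> Zvec - {0}"
    using is_Zbasis_distinct(1) by (auto simp: is_Zbasis_def)
  then show "qform M e \<le> qform M f"
    using min by blast
  have "(cross2 e f)^2 = 1"
    using ef unfolding is_Zbasis_iff_cross2 by (metis power2_abs power_one)
  then show "qform M e * qform M f = 1 + (bform M e f)^2"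
    using qform_gram[OF sym, of e f] det by simp
qed

lemma qform_lincomb_ge:
  fixes a b :: int
  assumes sym: "M$1$2 = M$2$1" and a: "a \<noteq> 0" and b: "b \<noteq> 0"
    and m: "\<bar>bform M e f\<bar> \<le> qform M e" "\<bar>bform M e f\<bar> \<le> qform M f"
  shows "qform M e + qform M f - 2 * \<bar>bform M e f\<bar> \<le> qform M (of_int a *\<^sub>R e + of_int b *\<^sub>R f)"
proof -
  define x y m where "x = (of_int a :: real)" and "y = (of_int b :: real)" and "m = \<bar>bform M e f\<bar>"
  have "2 * \<bar>x\<bar> * \<bar>y\<bar> \<le> x^2 + y^2"
    using sum_squares_bound[of "\<bar>x\<bar>" "\<bar>y\<bar>"] by (simp add: power2_eq_square)
  then have "2 * \<bar>x\<bar> * \<bar>y\<bar> * m \<le> (x^2 + y^2) * m"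
    by (simp add: m_def mult_right_mono)
  moreover have "\<bar>2 * x * y * bform M e f\<bar> = 2 * \<bar>x\<bar> * \<bar>y\<bar> * m"
    by (simp add: abs_mult m_def)
  ultimately have "- ((x^2 + y^2) * m) \<le> 2 * x * y * bform M e f"
    using abs_ge_minus_self[of "2 * x * y * bform M e f"] by linarith
  moreover have "x^2 * (qform M e - m) + y^2 * (qform M f - m)
      = x^2 * qform M e + y^2 * qform M f - (x^2 + y^2) * m"
    by (simp add: algebra_simps)
  ultimately have "x^2 * (qform M e - m) + y^2 * (qform M f - m)
      \<le> x^2 * qform M e + 2 * x * y * bform M e f + y^2 * qform M f"
    by linarith
  moreover have "qform M e - m \<le> x^2 * (qform M e - m)" "qform M f - m \<le> y^2 * (qform M f - m)"
    using int_nonzero_sq_ge_1[OF a] int_nonzero_sq_ge_1[OF b] m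
    by (simp_all add: x_def y_def m_def mult_le_cancel_right1)
  ultimately show ?thesis
    unfolding qform_lincomb[OF sym] x_def y_def m_def by linarith
qed

text \<open>The numerical heart of the stability argument: with \<open>\<epsilon> = \<tau>\<^sup>4 - 1\<close>, the constraint
  \<open>3 \<kappa>\<^sup>2 \<epsilon> \<le> 1\<close> gives \<open>3 \<kappa>\<^sup>2 E F \<epsilon> \<le> E F = 1 + m\<^sup>2 \<le> 17/16\<close>, while \<open>\<kappa> E \<ge> 1\<close> and
  \<open>m \<le> E/4\<close> give \<open>3 \<kappa>\<^sup>2 E (E - 2 m) \<ge> 3/2\<close>.\<close>

lemma distortion_margin:
  fixes \<kappa> \<tau> E F m :: real
  assumes \<kappa>: "1 \<le> \<kappa>" and \<kappa>E: "1 \<le> \<kappa> * E" and EF: "E * F = 1 + m^2"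
    and m: "0 \<le> m" "m \<le> 1 / (4 * \<kappa>)" and \<tau>: "1 \<le> \<tau>" "\<tau>^4 \<le> 1 + 1 / (3 * \<kappa>^2)"
  shows "\<tau>^4 * F < E + F - 2 * m"
proof -
  define \<epsilon> where "\<epsilon> = \<tau>^4 - 1"
  have E: "0 < E"
  proof (rule ccontr)
    assume "\<not> 0 < E"
    then have "\<kappa> * E \<le> 0"
      using \<kappa> by (simp add: mult_nonneg_nonpos)
    then show False
      using \<kappa>E by simp
  qed
  have k2: "0 < 3 * \<kappa>^2"
    using \<kappa> by simp
  have "0 \<le> \<epsilon>"
    using \<tau>(1) by (simp add: \<epsilon>_def one_le_power)
  have "3 * \<kappa>^2 * \<epsilon> \<le> 1"
    using \<tau>(2) k2 by (simp add: \<epsilon>_def field_simps)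
  have "m \<le> 1/4"
    using m(2) \<kappa> by (smt (verit) divide_left_mono mult_pos_pos)
  then have "m^2 \<le> (1/4)^2"
    using m(1) by (intro power_mono) auto
  moreover have "1 \<le> (\<kappa> * E)^2"
    using \<kappa>E by (rule one_le_power)
  ultimately have "E * F < (3/2) * (\<kappa> * E)^2"
    using EF by (simp add: power_divide)
  have "(3 * \<kappa>^2 * E) * (F * \<epsilon>) = (3 * \<kappa>^2 * \<epsilon>) * (E * F)"
    by (simp add: algebra_simps)
  also have "\<dots> \<le> E * F"
    using \<open>3 * \<kappa>^2 * \<epsilon> \<le> 1\<close> \<open>0 \<le> \<epsilon>\<close> EF by (simp add: mult_left_le_one_le)
  also have "\<dots> < (3/2) * (\<kappa> * E)^2"
    by fact
  also have "\<dots> \<le> (3 * \<kappa>^2 * E) * (E - 2 * m)"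
  proof -
    have "1 / (4 * \<kappa>) \<le> E / 4"
      using \<kappa> \<kappa>E by (simp add: field_simps)
    then have "E / 2 \<le> E - 2 * m"
      using m(2) by linarith
    then have "(3 * \<kappa>^2 * E) * (E / 2) \<le> (3 * \<kappa>^2 * E) * (E - 2 * m)"
      using k2 E by (intro mult_left_mono) simp_all
    moreover have "(3/2) * (\<kappa> * E)^2 = (3 * \<kappa>^2 * E) * (E / 2)"
      by (simp add: power2_eq_square algebra_simps)
    ultimately show ?thesis
      by simp
  qed
  finally have "F * \<epsilon> < E - 2 * m"
    using k2 E by (simp add: mult_less_cancel_left_pos)
  then show ?thesis
    by (simp add: \<epsilon>_def algebra_simps)
qed

lemma reduced_basis_kappa_qform_ge_1:
  assumes "reduced_basis M e f" and "\<forall>x. (norm x)^2 \<le> \<kappa> * qform M x"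
  shows "1 \<le> \<kappa> * qform M e"
proof -
  have "e \<in> Zvec" "e \<noteq> 0"
    using assms(1) is_Zbasis_distinct(1) unfolding reduced_basis_def is_Zbasis_def by blast+
  then show ?thesis
    using Zvec_norm_sq_ge_1 assms(2) order_trans by blast
qed

lemma strictly_reduced_under_distortion:
  assumes sym: "M$1$2 = M$2$1" and det: "det M = 1" and red: "reduced_basis M e f"
    and low: "\<forall>x. (norm x)^2 \<le> \<kappa> * qform M x" and \<kappa>: "1 \<le> \<kappa>"
    and mu: "\<bar>bform M e f\<bar> \<le> 1 / (4 * \<kappa>)"
    and \<tau>: "1 \<le> \<tau>" "\<tau>^4 \<le> 1 + 1 / (3 * \<kappa>^2)"
    and close: "\<forall>x. qform M x \<le> \<tau>^2 * qform M' x" "\<forall>x. qform M' x \<le> \<tau>^2 * qform M x"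
  shows "strictly_reduced M' e f"
proof -
  define E F m where "E = qform M e" and "F = qform M f" and "m = \<bar>bform M e f\<bar>"
  have EF: "E \<le> F" "E * F = 1 + m^2"
    using reduced_basis_qform[OF sym det red] unfolding E_def F_def m_def by simp_all
  have \<kappa>E: "1 \<le> \<kappa> * E"
    using reduced_basis_kappa_qform_ge_1[OF red low] E_def by simp
  have margin: "\<tau>^4 * F < E + F - 2 * m"
    using distortion_margin[OF \<kappa> \<kappa>E EF(2) _ _ \<tau>] mu m_def by simp
  have "1 / (4 * \<kappa>) \<le> E"
    using \<kappa> \<kappa>E by (simp add: field_simps)
  then have mE: "m \<le> E" "m \<le> F"
    using mu EF(1) m_def by linarith+
  have \<tau>2: "0 < \<tau>^2" and \<tau>4: "\<tau>^2 * \<tau>^2 = \<tau>^4"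
    using \<tau>(1) by (simp_all flip: power_add)
  have short: "\<tau>^2 * qform M' g \<le> \<tau>^4 * F" if "g \<in> {e, f}" for g
  proof -
    have "qform M g \<le> F"
      using that EF(1) unfolding E_def F_def by auto
    then have "qform M' g \<le> \<tau>^2 * F"
      using close(2) \<tau>2 by (meson mult_left_mono less_imp_le order_trans)
    then have "\<tau>^2 * qform M' g \<le> \<tau>^2 * (\<tau>^2 * F)"
      by (rule mult_left_mono) (use \<tau>2 in simp)
    then show ?thesis
      using \<tau>4 by (metis mult.assoc)
  qed
  show ?thesis
    unfolding strictly_reduced_def
  proof (intro allI impI)
    fix a b :: int
    assume "a \<noteq> 0" "b \<noteq> 0"
    then have "E + F - 2 * m \<le> qform M (of_int a *\<^sub>R e + of_int b *\<^sub>R f)"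
      using qform_lincomb_ge[OF sym] mE unfolding E_def F_def m_def by blast
    then have "\<tau>^4 * F < \<tau>^2 * qform M' (of_int a *\<^sub>R e + of_int b *\<^sub>R f)"
      using margin close(1) by (meson less_le_trans order_trans)
    then show "qform M' e < qform M' (of_int a *\<^sub>R e + of_int b *\<^sub>R f) \<and>
        qform M' f < qform M' (of_int a *\<^sub>R e + of_int b *\<^sub>R f)"
      using short[of e] short[of f] \<tau>2 by (meson insertI1 insertI2 singletonI
          mult_less_cancel_left_pos le_less_trans)
  qed
qed

lemma reduced_basis_norm_le:
  assumes sym: "M$1$2 = M$2$1" and det: "det M = 1" and red: "reduced_basis M e f"
    and low: "\<forall>x. (norm x)^2 \<le> \<kappa> * qform M x" and \<kappa>: "1 \<le> \<kappa>"
    and mu: "\<bar>bform M e f\<bar> \<le> 1 / (4 * \<kappa>)"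
  shows "norm e \<le> 2 * \<kappa>"
proof -
  define E where "E = qform M e"
  have "0 < \<kappa> * E"
    using reduced_basis_kappa_qform_ge_1[OF red low] E_def by simp
  then have "0 < E"
    using \<kappa> by (simp add: zero_less_mult_iff)
  have "1 / (4 * \<kappa>) \<le> 1"
    using \<kappa> by (simp add: field_simps)
  then have "(bform M e f)^2 \<le> 1"
    using mu by (metis abs_ge_zero order_trans power2_abs power_le_one)
  then have "E * E \<le> 2^2"
    using reduced_basis_qform[OF sym det red] mult_left_mono[of E "qform M f" E] \<open>0 < E\<close>
    unfolding E_def by simp
  then have "E^2 \<le> 2^2"
    by (simp add: power2_eq_square)
  then have "E \<le> 2"
    by (rule power2_le_imp_le) simp
  then have "(norm e)^2 \<le> \<kappa> * 2"
    using low[rule_format, of e] \<kappa> unfolding E_def by (meson mult_left_mono order_trans zero_le_one)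
  also have "\<dots> \<le> (2 * \<kappa>)^2"
    using mult_left_mono[OF \<kappa>, of \<kappa>] \<kappa> by (simp add: power2_eq_square)
  finally show ?thesis
    by (rule power2_le_imp_le) (use \<kappa> in simp)
qed

definition reduced_pair :: "real^2^2 \<Rightarrow> (real^2) \<times> (real^2)" where
  "reduced_pair M = (SOME b. reduced_basis M (fst b) (snd b))"

lemma stencilW_reduced:
  "mu (Mof D p) \<le> theta_0 D \<Longrightarrow> reduced_pair (Mof D p) = (e, f) \<Longrightarrow>
    stencilW D V p = {e, -e, f, -f}"
  unfolding stencilW_def reduced_pair_def by simp

lemma stencilW'_reduced:
  "mu (Mof D p) \<le> theta_0 D \<Longrightarrow> reduced_pair (Mof D p) = (e, f) \<Longrightarrow>
    stencilW' D V p = {e, -e, f, -f, e + f, -(e + f), e - f, -(e - f)}"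
  unfolding stencilW'_def reduced_pair_def by simp

lemma stencils_not_reduced:
  "\<not> mu (Mof D p) \<le> theta_0 D \<Longrightarrow> stencilW D V p = V p \<and> stencilW' D V p = V p"
  unfolding stencilW_def stencilW'_def by simp

lemma mu_reduced_pair: "reduced_pair M = (e, f) \<Longrightarrow> mu M = \<bar>bform M e f\<bar>"
  unfolding mu_def reduced_pair_def bform_def by simp

lemma reduced_basis_reduced_pair:
  assumes "D z \<in> S2plus" and "reduced_pair (Mof D z) = (e, f)"
  shows "reduced_basis (Mof D z) e f"
proof -
  have K: "1 \<le> cond_num (D z)"
    using cond_num_ge_1[OF assms(1)] .
  then have "\<forall>x. (1 / cond_num (D z)) * (norm x)^2 \<le> qform (Mof D z) x"
    using norm_sq_le_cond_num_qform_Mof[of D z, OF assms(1)] by (simp add: field_simps)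
  moreover have "0 < 1 / cond_num (D z)"
    using K by simp
  ultimately have "\<exists>e f. reduced_basis (Mof D z) e f"
    using exists_reduced_basis[OF Mof_symmetric[of D z, OF assms(1)]] by blast
  then have "\<exists>b. reduced_basis (Mof D z) (fst b) (snd b)"
    by auto
  then have "reduced_basis (Mof D z) (fst (reduced_pair (Mof D z))) (snd (reduced_pair (Mof D z)))"
    unfolding reduced_pair_def by (rule someI_ex)
  then show ?thesis
    using assms(2) by simp
qed

lemma tau_pq_pow4_le:
  assumes spd: "\<forall>z. D z \<in> S2plus" and kappa: "\<forall>z. cond_num (D z) \<le> kappa_bold D"
    and tau_small: "tau_h D h \<le> (1 + 1 / (3 * (kappa_bold D)\<^sup>2)) powr (1/4)"
    and pq: "norm (p - q) \<le> 2 * kappa_bold D * h"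
  shows "(tau_pq D p q)^4 \<le> 1 + 1 / (3 * (kappa_bold D)\<^sup>2)"
proof -
  have "(tau_pq D p q)^4 \<le> ((1 + 1 / (3 * (kappa_bold D)\<^sup>2)) powr (1/4))^4"
    using tau_pq_le_tau_h[OF spd kappa pq] tau_small tau_pq_bounds(1)[OF spd kappa, of p q]
    by (intro power_mono) auto
  also have "\<dots> = 1 + 1 / (3 * (kappa_bold D)\<^sup>2)"
    using add_pos_nonneg[of 1 "1 / (3 * (kappa_bold D)\<^sup>2)"] by (simp add: powr_power)
  finally show ?thesis .
qed

lemma strictly_reduced_at_neighbour:
  assumes spd: "\<forall>z. D z \<in> S2plus" and kappa: "\<forall>z. cond_num (D z) \<le> kappa_bold D"
    and h: "0 \<le> h" and tau_small: "tau_h D h \<le> (1 + 1 / (3 * (kappa_bold D)\<^sup>2)) powr (1/4)"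
    and red: "mu (Mof D z) \<le> theta_0 D" and ef: "reduced_pair (Mof D z) = (e, f)"
    and w: "w \<in> {e, -e}"
  shows "strictly_reduced (Mof D (z + h *\<^sub>R w)) e f"
proof -
  define \<kappa> M \<tau> where "\<kappa> = kappa_bold D" and "M = Mof D z" and "\<tau> = tau_pq D z (z + h *\<^sub>R w)"
  have R: "reduced_basis M e f"
    using reduced_basis_reduced_pair spd ef M_def by blast
  have sym: "M$1$2 = M$2$1" and det: "det M = 1"
    using Mof_symmetric det_Mof spd M_def by blast+
  have low: "\<forall>x. (norm x)^2 \<le> \<kappa> * qform M x"
    using qform_Mof_le_kappa(2) spd kappa M_def \<kappa>_def by blast
  have \<kappa>: "1 \<le> \<kappa>"
    using cond_num_ge_1 spd kappa \<kappa>_def order_trans by blast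
  have mu: "\<bar>bform M e f\<bar> \<le> 1 / (4 * \<kappa>)"
    using red mu_reduced_pair[OF ef] M_def \<kappa>_def theta_0_def by simp
  have "norm (z - (z + h *\<^sub>R w)) \<le> 2 * \<kappa> * h"
    using mult_left_mono[OF reduced_basis_norm_le[OF sym det R low \<kappa> mu] h] w h
    by (auto simp: mult.commute)
  then have "\<tau>^4 \<le> 1 + 1 / (3 * \<kappa>\<^sup>2)"
    using tau_pq_pow4_le[OF spd kappa tau_small] \<tau>_def \<kappa>_def by blast
  moreover have "1 \<le> \<tau>" "\<forall>x. qform M x \<le> \<tau>^2 * qform (Mof D (z + h *\<^sub>R w)) x"
    "\<forall>x. qform (Mof D (z + h *\<^sub>R w)) x \<le> \<tau>^2 * qform M x"
    using tau_pq_bounds(1,3,4)[OF spd kappa, where p = z and q = "z + h *\<^sub>R w"] M_def \<tau>_def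
    by simp_all
  ultimately show ?thesis
    using strictly_reduced_under_distortion[OF sym det R low \<kappa> mu] by blast
qed

lemma strictly_reduced_subset_stencilW:
  assumes spd: "\<forall>z. D z \<in> S2plus"
    and V: "\<forall>p. \<exists>e0 e1 e2. obtuse_superbase (Mof D p) e0 e1 e2 \<and> V p = {e0, -e0, e1, -e1, e2, -e2}"
    and ef: "is_Zbasis e f" and strict: "strictly_reduced (Mof D q) e f"
  shows "{e, -e, f, -f} \<subseteq> stencilW D V q"
proof (cases "mu (Mof D q) \<le> theta_0 D")
  case True
  obtain e' f' where ef': "reduced_pair (Mof D q) = (e', f')"
    by fastforce
  then have "reduced_basis (Mof D q) e' f'"
    using reduced_basis_reduced_pair spd by blast
  then show ?thesis
    using strictly_reduced_subset_reduced_basis[OF ef strict] stencilW_reduced[OF True ef'] by simp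
next
  case False
  obtain e0 e1 e2 where sb: "obtuse_superbase (Mof D q) e0 e1 e2"
    and Vq: "V q = {e0, -e0, e1, -e1, e2, -e2}"
    using V by blast
  then show ?thesis
    using strictly_reduced_subset_obtuse_superbase[OF ef strict _ sb] Mof_symmetric spd
      stencils_not_reduced[OF False] by simp
qed

lemma Omega_iff:
  assumes "h = 1 / real n" "0 < n"
  shows "z \<in> Omega h \<longleftrightarrow> (\<forall>i. 0 \<le> z$i \<and> z$i < 1 \<and> z$i * real n \<in> \<int>)"
  unfolding Omega_def using assms by simp

lemma vec_frac_eq_self: "(\<forall>i. 0 \<le> z$i \<and> z$i < 1) \<Longrightarrow> vec_frac z = z"
  by (simp add: vec_frac_def vec_eq_iff frac_eq)

lemma vec_frac_add_Zvec: "v \<in> Zvec \<Longrightarrow> vec_frac (x + v) = vec_frac x"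
  by (auto simp: vec_frac_def vec_eq_iff Zvec_def frac_def elim!: Ints_cases)

lemma vec_frac_shift_Omega:
  assumes n: "h = 1 / real n" "0 < n" and z: "z \<in> Omega h" and w: "w \<in> Zvec"
  shows "vec_frac (z + h *\<^sub>R w) \<in> Omega h"
proof -
  have "vec_frac (z + h *\<^sub>R w) $ i * real n \<in> \<int>" for i
  proof -
    have "(z + h *\<^sub>R w) $ i * real n = z$i * real n + w$i"
      using n by (simp add: field_simps)
    then have "(z + h *\<^sub>R w) $ i * real n \<in> \<int>"
      using z w n by (simp add: Omega_iff Zvec_def)
    then show ?thesis
      by (simp add: vec_frac_def frac_def left_diff_distrib)
  qed
  then show ?thesis
    using vec_frac_bounds Omega_iff[OF n] by blast
qed

lemma vec_frac_shift_inverse: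
  assumes n: "h = 1 / real n" "0 < n" and z: "z \<in> Omega h" and w: "w \<in> Zvec"
  shows "vec_frac (vec_frac (z + h *\<^sub>R w) + h *\<^sub>R (- w)) = z"
proof -
  have "vec_frac (z + h *\<^sub>R w) + h *\<^sub>R (- w) = z + (vec_frac (z + h *\<^sub>R w) - (z + h *\<^sub>R w))"
    by (simp add: algebra_simps)
  moreover have "vec_frac (z + h *\<^sub>R w) - (z + h *\<^sub>R w) \<in> Zvec"
    using vec_frac_diff_Zvec by (metis Zvec_closed(4) minus_diff_eq)
  ultimately show ?thesis
    using vec_frac_add_Zvec vec_frac_eq_self z Omega_iff[OF n] by metis
qed

lemma sum_Omega_shift:
  assumes n: "h = 1 / real n" "0 < n" and w: "w \<in> Zvec"
  shows "(\<Sum>z\<in>Omega h. H (vec_frac (z + h *\<^sub>R w))) = (\<Sum>q\<in>Omega h. H q)"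
proof (rule sum.reindex_bij_witness[where i = "\<lambda>q. vec_frac (q + h *\<^sub>R (- w))"
      and j = "\<lambda>z. vec_frac (z + h *\<^sub>R w)"])
  have w': "- w \<in> Zvec"
    using w by blast
  show "\<And>a. a \<in> Omega h \<Longrightarrow> vec_frac (vec_frac (a + h *\<^sub>R w) + h *\<^sub>R - w) = a"
    using vec_frac_shift_inverse[OF n _ w] by blast
  show "\<And>a. a \<in> Omega h \<Longrightarrow> vec_frac (a + h *\<^sub>R w) \<in> Omega h"
    using vec_frac_shift_Omega[OF n _ w] by blast
  show "\<And>b. b \<in> Omega h \<Longrightarrow> vec_frac (vec_frac (b + h *\<^sub>R - w) + h *\<^sub>R w) = b"
    using vec_frac_shift_inverse[OF n _ w'] by simp
  show "\<And>b. b \<in> Omega h \<Longrightarrow> vec_frac (b + h *\<^sub>R - w) \<in> Omega h"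
    using vec_frac_shift_Omega[OF n _ w'] by blast
qed simp

lemma sum_Omega_shift_swap:
  assumes n: "h = 1 / real n" "0 < n" and A: "A \<subseteq> Zvec"
  shows "(\<Sum>z\<in>Omega h. \<Sum>w\<in>A. H w (vec_frac (z + h *\<^sub>R w))) = (\<Sum>q\<in>Omega h. \<Sum>w\<in>A. H w q)"
proof -
  have "(\<Sum>z\<in>Omega h. \<Sum>w\<in>A. H w (vec_frac (z + h *\<^sub>R w)))
      = (\<Sum>w\<in>A. \<Sum>z\<in>Omega h. H w (vec_frac (z + h *\<^sub>R w)))"
    by (rule sum.swap)
  also have "\<dots> = (\<Sum>w\<in>A. \<Sum>q\<in>Omega h. H w q)"
  proof (rule sum.cong[OF refl])
    fix w
    assume "w \<in> A"
    then show "(\<Sum>z\<in>Omega h. H w (vec_frac (z + h *\<^sub>R w))) = (\<Sum>q\<in>Omega h. H w q)"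
      using A sum_Omega_shift[OF n, of w "H w"] by blast
  qed
  also have "\<dots> = (\<Sum>q\<in>Omega h. \<Sum>w\<in>A. H w q)"
    by (rule sum.swap)
  finally show ?thesis .
qed

lemma finite_Omega:
  assumes n: "h = 1 / real n" "0 < n"
  shows "finite (Omega h)"
proof -
  have "Omega h \<subseteq> (\<lambda>v. h *\<^sub>R v) ` {v \<in> Zvec. (norm v)^2 \<le> 2 * (real n)^2}"
  proof
    fix z assume z: "z \<in> Omega h"
    define v where "v = real n *\<^sub>R z"
    have c: "0 \<le> z$i \<and> z$i < 1 \<and> z$i * real n \<in> \<int>" for i
      using z Omega_iff[OF n] by blast
    have "v \<in> Zvec"
      unfolding v_def Zvec_def using c by (simp add: mult.commute)
    moreover have "(norm v)^2 \<le> 2 * (real n)^2"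
    proof -
      have "(z$1)^2 \<le> 1" "(z$2)^2 \<le> 1"
        using c[of 1] c[of 2] by (simp_all add: power_le_one)
      then have "(norm z)^2 \<le> 2"
        by (simp add: norm_vec2_sq)
      then have "(real n)^2 * (norm z)^2 \<le> (real n)^2 * 2"
        by (rule mult_left_mono) simp
      then show ?thesis
        unfolding v_def by (simp add: power_mult_distrib mult.commute)
    qed
    moreover have "z = h *\<^sub>R v"
      unfolding v_def using n by simp
    ultimately show "z \<in> (\<lambda>v. h *\<^sub>R v) ` {v \<in> Zvec. (norm v)^2 \<le> 2 * (real n)^2}"
      by blast
  qed
  then show ?thesis
    using finite_Zvec_ball finite_subset by blast
qed

section \<open>Comparison of the energies\<close>

definition local_energy :: "(real^2 \<Rightarrow> (real^2) set) \<Rightarrow> real \<Rightarrow> (real^2 \<Rightarrow> real) \<Rightarrow> real^2 \<Rightarrow> real"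
  where "local_energy W h u z = (\<Sum>g\<in>W z. (u (z + h *\<^sub>R g) - u z)^2)"

lemma energy_eq_sum_local_energy: "energy W h u = (\<Sum>z\<in>Omega h. local_energy W h u z)"
  by (simp add: energy_def local_energy_def)

lemma local_energy_nonneg: "0 \<le> local_energy W h u z"
  by (simp add: local_energy_def sum_nonneg)

lemma square_diff_le_split: "((x::real) - y)^2 \<le> 2 * (x - m)^2 + 2 * (m - y)^2"
  using zero_le_power2[of "(x - m) - (m - y)"] by (simp add: power2_eq_square algebra_simps)

lemma edge_split:
  fixes z a b :: "real^2" and h :: real and u :: "real^2 \<Rightarrow> real"
  assumes u_per: "\<forall>z v. v \<in> Zvec \<longrightarrow> u (z + v) = u z"
  defines "q \<equiv> vec_frac (z + h *\<^sub>R a)"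
  shows "(u (z + h *\<^sub>R (a + b)) - u z)^2 \<le> 2 * (u (q + h *\<^sub>R b) - u q)^2 + 2 * (u (z + h *\<^sub>R a) - u z)^2"
proof -
  have "z + h *\<^sub>R (a + b) = (q + h *\<^sub>R b) + ((z + h *\<^sub>R a) - q)"
    by (simp add: algebra_simps)
  then have "u (z + h *\<^sub>R (a + b)) = u (q + h *\<^sub>R b)"
    using u_per vec_frac_diff_Zvec q_def by metis
  moreover have "u (z + h *\<^sub>R a) = u q"
    using periodic_vec_frac[OF u_per] q_def by simp
  ultimately show ?thesis
    using square_diff_le_split[of "u (z + h *\<^sub>R (a + b))" "u z" "u (z + h *\<^sub>R a)"] by simp
qed

lemma sum_insert_le:
  fixes g :: "'a \<Rightarrow> real"
  assumes "finite A" "\<And>x. 0 \<le> g x"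
  shows "sum g (insert a A) \<le> g a + sum g A"
  using assms by (cases "a \<in> A") (auto simp: insert_absorb sum_nonneg add_increasing)

lemma add_le_sum:
  fixes g :: "'a \<Rightarrow> real"
  assumes "finite A" "\<And>x. 0 \<le> g x" "a \<noteq> b" "a \<in> A" "b \<in> A"
  shows "g a + g b \<le> sum g A"
proof -
  have "sum g {a, b} \<le> sum g A"
    using assms by (intro sum_mono2) auto
  then show ?thesis
    using assms(3) by simp
qed

lemma local_energy_refined_le:
  assumes u_per: "\<forall>z v. v \<in> Zvec \<longrightarrow> u (z + v) = u z" and fin: "\<forall>q. finite (W q)"
    and ef: "e \<noteq> 0" "f \<noteq> 0"
    and W: "W z = {e, -e, f, -f}" and W': "W' z = {e, -e, f, -f, e + f, -(e + f), e - f, -(e - f)}"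
    and nb: "{e, -e, f, -f} \<subseteq> W (vec_frac (z + h *\<^sub>R e))" "{e, -e, f, -f} \<subseteq> W (vec_frac (z + h *\<^sub>R (- e)))"
  shows "local_energy W' h u z \<le> 5 * local_energy W h u z
    + 2 * (local_energy W h u (vec_frac (z + h *\<^sub>R e)) + local_energy W h u (vec_frac (z + h *\<^sub>R (- e))))"
proof -
  define T where "T q g = (u (q + h *\<^sub>R g) - u q)^2" for q g
  define q1 q2 where "q1 = vec_frac (z + h *\<^sub>R e)" and "q2 = vec_frac (z + h *\<^sub>R (- e))"
  have G: "local_energy W h u q = sum (T q) (W q)" for q
    by (simp add: local_energy_def T_def)
  have T0: "0 \<le> T q g" for q g
    by (simp add: T_def)
  have ne: "e \<noteq> - e" "f \<noteq> - f"
    using ef by (simp_all add: vec2_eq_iff)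
  have W'_eq: "W' z = insert (e + f) (insert (- (e + f)) (insert (e - f) (insert (- (e - f)) (W z))))"
    unfolding W W' by (simp only: insert_commute)
  have "local_energy W' h u z \<le> T z (e + f) + (T z (- (e + f)) + (T z (e - f) + (T z (- (e - f))
      + local_energy W h u z)))"
    unfolding G W'_eq local_energy_def T_def[symmetric]
    by (intro order_trans[OF sum_insert_le[OF _ T0]] add_left_mono) (simp_all add: fin)
  moreover have "T z (e + f) \<le> 2 * T q1 f + 2 * T z e"
    using edge_split[OF u_per, of z h e f] unfolding T_def q1_def by simp
  moreover have "T z (- (e + f)) \<le> 2 * T q2 (- f) + 2 * T z (- e)"
    using edge_split[OF u_per, of z h "- e" "- f"] unfolding T_def q2_def by (simp add: algebra_simps)
  moreover have "T z (e - f) \<le> 2 * T q1 (- f) + 2 * T z e"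
    using edge_split[OF u_per, of z h e "- f"] unfolding T_def q1_def by (simp add: algebra_simps)
  moreover have "T z (- (e - f)) \<le> 2 * T q2 f + 2 * T z (- e)"
    using edge_split[OF u_per, of z h "- e" f] unfolding T_def q2_def by (simp add: algebra_simps)
  moreover have "T z e + T z (- e) \<le> local_energy W h u z"
    unfolding G by (rule add_le_sum) (use fin T0 ne W in auto)
  moreover have "T q1 f + T q1 (- f) \<le> local_energy W h u q1"
    unfolding G by (rule add_le_sum) (use fin T0 ne nb q1_def in auto)
  moreover have "T q2 f + T q2 (- f) \<le> local_energy W h u q2"
    unfolding G by (rule add_le_sum) (use fin T0 ne nb q2_def in auto)
  ultimately show ?thesis
    unfolding q1_def q2_def by argo
qed

text \<open>Double counting: a grid point \<open>q\<close> is charged once for every direction of its own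
  stencil \<open>W q\<close>, since \<open>w \<in> W q\<close> and \<open>q = z + h w\<close> determine \<open>z\<close>.\<close>

lemma sum_shifted_le_card:
  fixes G :: "real^2 \<Rightarrow> real"
  assumes n: "h = 1 / real n" "0 < n"
    and S: "\<forall>z\<in>Omega h. finite (S z) \<and> S z \<subseteq> Zvec \<and> (\<forall>w\<in>S z. w \<in> W (vec_frac (z + h *\<^sub>R w)))"
    and W: "\<forall>q. finite (W q) \<and> card (W q) \<le> k" and G: "\<forall>q. 0 \<le> G q"
  shows "(\<Sum>z\<in>Omega h. \<Sum>w\<in>S z. G (vec_frac (z + h *\<^sub>R w))) \<le> real k * (\<Sum>q\<in>Omega h. G q)"
proof -
  define A where "A = (\<Union>z\<in>Omega h. S z)"
  have A: "finite A" "A \<subseteq> Zvec"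
    using S finite_Omega[OF n] unfolding A_def by auto
  define H where "H w q = (if w \<in> W q then G q else 0)" for w q
  have "(\<Sum>w\<in>S z. G (vec_frac (z + h *\<^sub>R w))) \<le> (\<Sum>w\<in>A. H w (vec_frac (z + h *\<^sub>R w)))"
    if z: "z \<in> Omega h" for z
  proof -
    have "(\<Sum>w\<in>S z. G (vec_frac (z + h *\<^sub>R w)))
        = (\<Sum>w\<in>A. if w \<in> S z then G (vec_frac (z + h *\<^sub>R w)) else 0)"
      using z A(1) by (simp add: sum.If_cases Int_absorb1 A_def UN_upper)
    also have "\<dots> \<le> (\<Sum>w\<in>A. H w (vec_frac (z + h *\<^sub>R w)))"
      using S z G by (intro sum_mono) (auto simp: H_def)
    finally show ?thesis .
  qed
  then have "(\<Sum>z\<in>Omega h. \<Sum>w\<in>S z. G (vec_frac (z + h *\<^sub>R w)))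
      \<le> (\<Sum>z\<in>Omega h. \<Sum>w\<in>A. H w (vec_frac (z + h *\<^sub>R w)))"
    by (rule sum_mono)
  also have "\<dots> = (\<Sum>q\<in>Omega h. \<Sum>w\<in>A. H w q)"
    using sum_Omega_shift_swap[OF n A(2)] .
  also have "\<dots> \<le> (\<Sum>q\<in>Omega h. real k * G q)"
  proof (rule sum_mono)
    fix q
    have "(\<Sum>w\<in>A. H w q) = real (card (A \<inter> W q)) * G q"
      unfolding H_def using A(1) by (simp add: sum.If_cases)
    also have "\<dots> \<le> real k * G q"
    proof -
      have "card (A \<inter> W q) \<le> k"
        using W card_mono[of "W q" "A \<inter> W q"] by (meson Int_lower2 order_trans)
      then show ?thesis
        using G by (intro mult_right_mono) simp_all
    qed
    finally show "(\<Sum>w\<in>A. H w q) \<le> real k * G q" .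
  qed
  finally show ?thesis
    by (simp add: sum_distrib_left)
qed

definition refines_by_diagonals ::
  "(real^2 \<Rightarrow> (real^2) set) \<Rightarrow> (real^2 \<Rightarrow> (real^2) set) \<Rightarrow> real \<Rightarrow> real^2 \<Rightarrow> bool" where
  "refines_by_diagonals W W' h z \<longleftrightarrow> W' z = W z \<or> (\<exists>e f. e \<in> Zvec \<and> e \<noteq> 0 \<and> f \<noteq> 0 \<and>
     W z = {e, -e, f, -f} \<and> W' z = {e, -e, f, -f, e + f, -(e + f), e - f, -(e - f)} \<and>
     {e, -e, f, -f} \<subseteq> W (vec_frac (z + h *\<^sub>R e)) \<and> {e, -e, f, -f} \<subseteq> W (vec_frac (z + h *\<^sub>R (- e))))"

lemma refines_by_diagonals_local_energy:
  assumes u_per: "\<forall>z v. v \<in> Zvec \<longrightarrow> u (z + v) = u z" and fin: "\<forall>q. finite (W q)"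
    and refined: "refines_by_diagonals W W' h z"
  obtains S where "finite S" "S \<subseteq> Zvec" "\<forall>w\<in>S. w \<in> W (vec_frac (z + h *\<^sub>R w))"
    "local_energy W' h u z
      \<le> 5 * local_energy W h u z + 2 * (\<Sum>w\<in>S. local_energy W h u (vec_frac (z + h *\<^sub>R w)))"
proof -
  consider "W' z = W z" | e f where "e \<in> Zvec" "e \<noteq> 0" "f \<noteq> 0" "W z = {e, -e, f, -f}"
    "W' z = {e, -e, f, -f, e + f, -(e + f), e - f, -(e - f)}"
    "{e, -e, f, -f} \<subseteq> W (vec_frac (z + h *\<^sub>R e))" "{e, -e, f, -f} \<subseteq> W (vec_frac (z + h *\<^sub>R (- e)))"
    using refined unfolding refines_by_diagonals_def by meson
  then show ?thesis
  proof cases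
    case 1
    then have "local_energy W' h u z = local_energy W h u z"
      by (simp add: local_energy_def)
    then show ?thesis
      using that[of "{}"] local_energy_nonneg[of W h u z] by simp
  next
    case (2 e f)
    have "e \<noteq> - e"
      using \<open>e \<noteq> 0\<close> by (simp add: vec2_eq_iff)
    moreover have "local_energy W' h u z \<le> 5 * local_energy W h u z
        + 2 * (local_energy W h u (vec_frac (z + h *\<^sub>R e)) + local_energy W h u (vec_frac (z + h *\<^sub>R (- e))))"
      using local_energy_refined_le[of u W e f z W' h] u_per fin 2(2-7) by blast
    ultimately show ?thesis
      using that[of "{e, -e}"] 2 by auto
  qed
qed

lemma energy_refined_le:
  assumes n: "h = 1 / real n" "0 < n" and u_per: "\<forall>z v. v \<in> Zvec \<longrightarrow> u (z + v) = u z"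
    and W: "\<forall>q. finite (W q) \<and> card (W q) \<le> 6"
    and refined: "\<forall>z\<in>Omega h. refines_by_diagonals W W' h z"
  shows "energy W' h u \<le> 17 * energy W h u"
proof -
  let ?L = "local_energy W h u"
  have "\<forall>z\<in>Omega h. \<exists>S. (finite S \<and> S \<subseteq> Zvec \<and> (\<forall>w\<in>S. w \<in> W (vec_frac (z + h *\<^sub>R w)))) \<and>
      local_energy W' h u z \<le> 5 * ?L z + 2 * (\<Sum>w\<in>S. ?L (vec_frac (z + h *\<^sub>R w)))"
    using refines_by_diagonals_local_energy[OF u_per] W refined by metis
  then obtain S where S: "\<forall>z\<in>Omega h. finite (S z) \<and> S z \<subseteq> Zvec \<and>
      (\<forall>w\<in>S z. w \<in> W (vec_frac (z + h *\<^sub>R w)))"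
    and local: "\<forall>z\<in>Omega h. local_energy W' h u z \<le> 5 * ?L z + 2 * (\<Sum>w\<in>S z. ?L (vec_frac (z + h *\<^sub>R w)))"
    by metis
  have "energy W' h u \<le> (\<Sum>z\<in>Omega h. 5 * ?L z + 2 * (\<Sum>w\<in>S z. ?L (vec_frac (z + h *\<^sub>R w))))"
    unfolding energy_eq_sum_local_energy using local by (intro sum_mono) blast
  also have "\<dots> = 5 * energy W h u + 2 * (\<Sum>z\<in>Omega h. \<Sum>w\<in>S z. ?L (vec_frac (z + h *\<^sub>R w)))"
    by (simp add: energy_eq_sum_local_energy sum.distrib sum_distrib_left)
  also have "\<dots> \<le> 5 * energy W h u + 2 * (6 * energy W h u)"
    using sum_shifted_le_card[OF n S W, of ?L] local_energy_nonneg
    by (simp add: energy_eq_sum_local_energy)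
  finally show ?thesis
    by simp
qed

lemma card_stencilW_le_6:
  assumes V: "\<forall>p. \<exists>e0 e1 e2. obtuse_superbase (Mof D p) e0 e1 e2 \<and> V p = {e0, -e0, e1, -e1, e2, -e2}"
  shows "finite (stencilW D V q) \<and> card (stencilW D V q) \<le> 6"
proof (cases "mu (Mof D q) \<le> theta_0 D")
  case True
  obtain e f where "reduced_pair (Mof D q) = (e, f)"
    by fastforce
  then show ?thesis
    using stencilW_reduced[OF True] card_length[of "[e, -e, f, -f]"] by simp
next
  case False
  obtain e0 e1 e2 where "V q = {e0, -e0, e1, -e1, e2, -e2}"
    using V by blast
  then show ?thesis
    using stencils_not_reduced[OF False] card_length[of "[e0, -e0, e1, -e1, e2, -e2]"] by simp
qed

lemma stencils_refine_by_diagonals: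
  assumes cont: "continuous_on UNIV D" and spd: "\<forall>z. D z \<in> S2plus"
    and per: "\<forall>z v. v \<in> Zvec \<longrightarrow> D (z + v) = D z"
    and V: "\<forall>p. \<exists>e0 e1 e2. obtuse_superbase (Mof D p) e0 e1 e2 \<and> V p = {e0, -e0, e1, -e1, e2, -e2}"
    and h: "0 \<le> h" and tau_small: "tau_h D h \<le> (1 + 1 / (3 * (kappa_bold D)\<^sup>2)) powr (1/4)"
  shows "refines_by_diagonals (stencilW D V) (stencilW' D V) h z"
proof (cases "mu (Mof D z) \<le> theta_0 D")
  case True
  obtain e f where ef: "reduced_pair (Mof D z) = (e, f)"
    by fastforce
  then have basis: "is_Zbasis e f"
    using reduced_basis_reduced_pair spd reduced_basis_def by blast
  then have ef_nonzero: "e \<in> Zvec" "e \<noteq> 0" "f \<noteq> 0"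
    using is_Zbasis_distinct is_Zbasis_commute is_Zbasis_def by metis+
  have kappa: "\<forall>z. cond_num (D z) \<le> kappa_bold D"
    using cond_num_le_kappa_bold[OF cont spd per] by blast
  have nb: "{e, -e, f, -f} \<subseteq> stencilW D V (vec_frac (z + h *\<^sub>R w))" if "w \<in> {e, -e}" for w
  proof -
    have "Mof D (vec_frac (z + h *\<^sub>R w)) = Mof D (z + h *\<^sub>R w)"
      unfolding Mof_def periodic_vec_frac[OF per] ..
    then show ?thesis
      using strictly_reduced_at_neighbour[OF spd kappa h tau_small True ef that]
        strictly_reduced_subset_stencilW[OF spd V basis] by simp
  qed
  have "{e, -e, f, -f} \<subseteq> stencilW D V (vec_frac (z + h *\<^sub>R e))"
    "{e, -e, f, -f} \<subseteq> stencilW D V (vec_frac (z + h *\<^sub>R (- e)))"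
    using nb[of e] nb[of "- e"] by blast+
  with ef_nonzero show ?thesis
    unfolding refines_by_diagonals_def stencilW_reduced[OF True ef] stencilW'_reduced[OF True ef]
    by (intro disjI2 exI[of _ e] exI[of _ f]) simp
qed (simp add: refines_by_diagonals_def stencils_not_reduced)

theorem mainTheorem19:
  fixes D :: "real^2 \<Rightarrow> real^2^2" and V :: "real^2 \<Rightarrow> (real^2) set"
    and n :: nat and h :: real and u :: "real^2 \<Rightarrow> real"
  assumes D_cont: "continuous_on UNIV D"
    and D_spd: "\<forall>z. D z \<in> S2plus"
    and D_per: "\<forall>z v. v \<in> Zvec \<longrightarrow> D (z + v) = D z"
    and V_def: "\<forall>p. \<exists>e0 e1 e2. obtuse_superbase (Mof D p) e0 e1 e2 \<and>
                      V p = {e0, -e0, e1, -e1, e2, -e2}"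
    and n_pos: "0 < n"
    and h_def: "h = 1 / real n"
    and tau_small: "tau_h D h \<le> (1 + 1 / (3 * (kappa_bold D)\<^sup>2)) powr (1/4)"
    and theta_small: "theta_h D h \<le> 1 / (4 * kappa_bold D)"
    and u_per: "\<forall>z v. v \<in> Zvec \<longrightarrow> u (z + v) = u z"
  shows "energy (stencilW' D V) h u \<le> 17 * energy (stencilW D V) h u"
proof (rule energy_refined_le[OF h_def n_pos u_per])
  show "\<forall>q. finite (stencilW D V q) \<and> card (stencilW D V q) \<le> 6"
    using card_stencilW_le_6[OF V_def] by blast
  show "\<forall>z\<in>Omega h. refines_by_diagonals (stencilW D V) (stencilW' D V) h z"
    using stencils_refine_by_diagonals[OF D_cont D_spd D_per V_def _ tau_small] h_def by simp
qed

end
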